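(* On $\overline{K}$ the following three $\sigma$-algebras coincide: the Borel $\sigma$-algebra $\mathcal{B}(\overline{K})$ of the strong (Fréchet) topology defined by the seminorms $\|y\|_n$; the Borel $\sigma$-algebra $\mathcal{B}(\overline{K},K)$ of the $*$-weak topology $\sigma(\overline{K},K)$; and the smallest $\sigma$-algebra $\mathcal{A}(\overline{K})$ with respect to which all continuous linear functionals $\overline{K}\to k$ are measurable.
   Context: Let $k$ be a non-Archimedean local field of characteristic $0$, and let $k=K_1\subset K_2\subset\cdots$ be an increasing sequence of finite extensions, $K=\bigcup_n K_n$. Let $m_n=[K_n:k]$, $|\cdot|_n$ the normalized absolute value of $K_n$, $\|x\|=|x|_n^{1/m_n}$ for $x\in K_n$. For $n\le\nu$ and $x\in K_\nu$ put $T_n(x)=\frac{m_n}{m_\nu}\mathrm{Tr}_{K_\nu/K_n}(x)$; $T=T_1$. $\overline{K}$ is the set of sequences $y=(y_1,y_2,\dots)$, $y_n\in K_n$, with $y_n=T_n(y_\nu)$ for $\nu>n$, topologized by the seminorms $\|y\|_n=\|y_n\|$; $T_n(y):=y_n$. The pairing is $\langle\xi,y\rangle=T(\xi\,T_n(y))$ for $\xi\in K_n$, $y\in\overline{K}$; the $*$-weak topology on $\overline K$ is the weakest one making all $y\mapsto\langle\xi,y\rangle$, $\xi\in K$, continuous. *)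

theory Defs
  imports "HOL-Analysis.Analysis"
begin

definition is_subfield :: "'a::field set \<Rightarrow> bool" where
  "is_subfield F \<longleftrightarrow> 0 \<in> F \<and> 1 \<in> F \<and>
     (\<forall>x\<in>F. \<forall>y\<in>F. x + y \<in> F \<and> x - y \<in> F \<and> x * y \<in> F) \<and>
     (\<forall>x\<in>F. x \<noteq> 0 \<longrightarrow> inverse x \<in> F)"

definition lin_span :: "'a::field set \<Rightarrow> 'a list \<Rightarrow> 'a set" where
  "lin_span F bs = {(\<Sum>i<length bs. c i * bs ! i) | c. \<forall>i<length bs. c i \<in> F}"

definition lin_indep :: "'a::field set \<Rightarrow> 'a list \<Rightarrow> bool" where
  "lin_indep F bs \<longleftrightarrow> (\<forall>c. (\<forall>i<length bs. c i \<in> F) \<longrightarrow>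
       (\<Sum>i<length bs. c i * bs ! i) = 0 \<longrightarrow> (\<forall>i<length bs. c i = 0))"

definition is_basis :: "'a::field set \<Rightarrow> 'a set \<Rightarrow> 'a list \<Rightarrow> bool" where
  "is_basis F L bs \<longleftrightarrow> set bs \<subseteq> L \<and> lin_indep F bs \<and> lin_span F bs = L"

definition finite_ext :: "'a::field set \<Rightarrow> 'a set \<Rightarrow> bool" where
  "finite_ext F L \<longleftrightarrow> is_subfield F \<and> is_subfield L \<and> F \<subseteq> L \<and> (\<exists>bs. is_basis F L bs)"

definition ext_degree :: "'a::field set \<Rightarrow> 'a set \<Rightarrow> nat" where
  "ext_degree F L = length (SOME bs. is_basis F L bs)"

definition coords :: "'a::field set \<Rightarrow> 'a list \<Rightarrow> 'a \<Rightarrow> nat \<Rightarrow> 'a" where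
  "coords F bs y = (THE c. (\<forall>i<length bs. c i \<in> F) \<and> (\<forall>i\<ge>length bs. c i = 0) \<and>
                         y = (\<Sum>i<length bs. c i * bs ! i))"

text \<open>Trace \<open>Tr_{L/F}(x)\<close>: trace of the \<open>F\<close>-linear map \<open>y \<mapsto> x y\<close> on \<open>L\<close>.\<close>
definition field_trace :: "'a::field set \<Rightarrow> 'a set \<Rightarrow> 'a \<Rightarrow> 'a" where
  "field_trace F L x = (let bs = (SOME bs. is_basis F L bs) in
      \<Sum>i<length bs. coords F bs (x * bs ! i) i)"

definition nonarch_absval :: "'a::field set \<Rightarrow> ('a \<Rightarrow> real) \<Rightarrow> bool" where
  "nonarch_absval F a \<longleftrightarrow>
     (\<forall>x\<in>F. a x \<ge> 0 \<and> (a x = 0 \<longleftrightarrow> x = 0)) \<and>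
     (\<forall>x\<in>F. \<forall>y\<in>F. a (x * y) = a x * a y \<and> a (x + y) \<le> max (a x) (a y))"

definition complete_absval :: "'a::field set \<Rightarrow> ('a \<Rightarrow> real) \<Rightarrow> bool" where
  "complete_absval F a \<longleftrightarrow> (\<forall>s. (\<forall>n. s n \<in> F) \<longrightarrow>
      (\<forall>e>0. \<exists>N::nat. \<forall>m\<ge>N. \<forall>n\<ge>N. a (s m - s n) < e) \<longrightarrow>
      (\<exists>l\<in>F. \<forall>e>0. \<exists>N::nat. \<forall>n\<ge>N. a (s n - l) < e))"

definition residue_field :: "'a::field set \<Rightarrow> ('a \<Rightarrow> real) \<Rightarrow> 'a set set" where
  "residue_field F a = {x\<in>F. a x \<le> 1} // {(x, y). x \<in> F \<and> y \<in> F \<and> a x \<le> 1 \<and> a y \<le> 1 \<and> a (x - y) < 1}"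

text \<open>\<open>a\<close> is the normalized absolute value of the non-Archimedean local field \<open>F\<close>:
  \<open>F\<close> is complete w.r.t. the non-Archimedean absolute value \<open>a\<close>, the residue field is finite
  with \<open>q\<close> elements, and the value group is \<open>q^\<int>\<close> (i.e. \<open>|x| = q^{-v(x)}\<close> for the normalized
  discrete valuation \<open>v\<close>).\<close>
definition normalized_local_field :: "'a::field set \<Rightarrow> ('a \<Rightarrow> real) \<Rightarrow> bool" where
  "normalized_local_field F a \<longleftrightarrow> is_subfield F \<and> nonarch_absval F a \<and> complete_absval F a \<and>
     finite (residue_field F a) \<and>
     a ` (F - {0}) = {(real (card (residue_field F a))) powi i | i. True}"

text \<open>Indices start at 0: \<open>K 0 = k\<close>.  \<open>m n = [K_n : k]\<close>.\<close>
definition mdeg :: "(nat \<Rightarrow> 'a::field set) \<Rightarrow> nat \<Rightarrow> nat" where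
  "mdeg K n = ext_degree (K 0) (K n)"

definition Tn :: "(nat \<Rightarrow> 'a::field_char_0 set) \<Rightarrow> nat \<Rightarrow> nat \<Rightarrow> 'a \<Rightarrow> 'a" where
  "Tn K n \<nu> x = (of_nat (mdeg K n) / of_nat (mdeg K \<nu>)) * field_trace (K n) (K \<nu>) x"

definition Kbar :: "(nat \<Rightarrow> 'a::field_char_0 set) \<Rightarrow> (nat \<Rightarrow> 'a) set" where
  "Kbar K = {y. (\<forall>n. y n \<in> K n) \<and> (\<forall>n \<nu>. n < \<nu> \<longrightarrow> y n = Tn K n \<nu> (y \<nu>))}"

definition seminorm :: "(nat \<Rightarrow> 'a::field_char_0 set) \<Rightarrow> (nat \<Rightarrow> 'a \<Rightarrow> real) \<Rightarrow> nat \<Rightarrow> (nat \<Rightarrow> 'a) \<Rightarrow> real" where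
  "seminorm K nabs n y = nabs n (y n) powr (1 / real (mdeg K n))"

definition strong_top :: "(nat \<Rightarrow> 'a::field_char_0 set) \<Rightarrow> (nat \<Rightarrow> 'a \<Rightarrow> real) \<Rightarrow> (nat \<Rightarrow> 'a) topology" where
  "strong_top K nabs = topology_generated_by
     (insert (Kbar K) {{z \<in> Kbar K. seminorm K nabs n (\<lambda>i. z i - y i) < r} | n y r. y \<in> Kbar K \<and> r > 0})"

definition k_top :: "'a::field set \<Rightarrow> ('a \<Rightarrow> real) \<Rightarrow> 'a topology" where
  "k_top k a = topology_generated_by (insert k {{z \<in> k. a (z - x) < r} | x r. x \<in> k \<and> r > 0})"

text \<open>The pairing \<open>\<langle>\<xi>,y\<rangle> = T(\<xi> T_n(y))\<close> for \<open>\<xi> \<in> K_n\<close> (independent of \<open>n\<close>; we take the least).\<close>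
definition pairing :: "(nat \<Rightarrow> 'a::field_char_0 set) \<Rightarrow> 'a \<Rightarrow> (nat \<Rightarrow> 'a) \<Rightarrow> 'a" where
  "pairing K \<xi> y = (let n = (LEAST n. \<xi> \<in> K n) in Tn K 0 n (\<xi> * y n))"

definition weak_top :: "(nat \<Rightarrow> 'a::field_char_0 set) \<Rightarrow> (nat \<Rightarrow> 'a \<Rightarrow> real) \<Rightarrow> (nat \<Rightarrow> 'a) topology" where
  "weak_top K nabs = topology_generated_by
     (insert (Kbar K) {{y \<in> Kbar K. pairing K \<xi> y \<in> U} | \<xi> U. \<xi> \<in> (\<Union>n. K n) \<and> openin (k_top (K 0) (nabs 0)) U})"

definition borel_sets :: "'b topology \<Rightarrow> 'b set set" where
  "borel_sets X = sigma_sets (topspace X) {U. openin X U}"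

definition cont_lin_functionals :: "(nat \<Rightarrow> 'a::field_char_0 set) \<Rightarrow> (nat \<Rightarrow> 'a \<Rightarrow> real) \<Rightarrow> ((nat \<Rightarrow> 'a) \<Rightarrow> 'a) set" where
  "cont_lin_functionals K nabs = {f.
     (\<forall>y\<in>Kbar K. f y \<in> K 0) \<and>
     (\<forall>c\<in>K 0. \<forall>y\<in>Kbar K. \<forall>z\<in>Kbar K. f (\<lambda>n. c * y n + z n) = c * f y + f z) \<and>
     continuous_map (strong_top K nabs) (k_top (K 0) (nabs 0)) f}"

definition A_sigma :: "(nat \<Rightarrow> 'a::field_char_0 set) \<Rightarrow> (nat \<Rightarrow> 'a \<Rightarrow> real) \<Rightarrow> (nat \<Rightarrow> 'a) set set" where
  "A_sigma K nabs = sigma_sets (Kbar K)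
     {{y \<in> Kbar K. f y \<in> B} | f B. f \<in> cont_lin_functionals K nabs \<and> B \<in> borel_sets (k_top (K 0) (nabs 0))}"

end

theory Submission
  imports Defs
begin

text \<open>Fix a \<open>k\<close>-basis of every \<open>K\<^sub>n\<close> and consider the coordinates of \<open>y\<^sub>n\<close> as functionals on
  \<open>\<overline>K\<close>. They are continuous for the strong topology, because \<open>K\<^sub>n\<close> is finite-dimensional over the
  complete field \<open>k\<close>, so coefficients are bounded by the absolute value of the linear combination.
  They are continuous for the *-weak topology, because the trace form is nondegenerate and each
  coordinate is therefore a multiple of a difference of two pairings. Conversely, a strong ball and
  a preimage of an open set under a pairing contain, around each of their points, a set on which
  finitely many coordinates are close to theirs. With a countable dense subset of the local field
  \<open>k\<close>, the preimages of small discs under the coordinates therefore form a countable subbase of both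
  topologies, so both Borel \<open>\<sigma>\<close>-algebras are generated by these cylinders. The cylinders lie in
  \<open>\<A>(\<overline>K)\<close>, and \<open>\<A>(\<overline>K)\<close> consists of strongly Borel sets since continuous maps are Borel
  measurable.\<close>

section \<open>Subfields, bases and traces\<close>

lemma subfield_0: "is_subfield F \<Longrightarrow> 0 \<in> F"
  and subfield_1: "is_subfield F \<Longrightarrow> 1 \<in> F"
  and subfield_add: "is_subfield F \<Longrightarrow> x \<in> F \<Longrightarrow> y \<in> F \<Longrightarrow> x + y \<in> F"
  and subfield_diff: "is_subfield F \<Longrightarrow> x \<in> F \<Longrightarrow> y \<in> F \<Longrightarrow> x - y \<in> F"
  and subfield_mult: "is_subfield F \<Longrightarrow> x \<in> F \<Longrightarrow> y \<in> F \<Longrightarrow> x * y \<in> F"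
  by (simp_all add: is_subfield_def)

lemma subfield_uminus: "is_subfield F \<Longrightarrow> x \<in> F \<Longrightarrow> - x \<in> F"
  using subfield_diff[of F 0 x] subfield_0[of F] by simp

lemma subfield_inverse: "is_subfield F \<Longrightarrow> x \<in> F \<Longrightarrow> inverse x \<in> F"
  by (cases "x = 0") (auto simp: is_subfield_def)

lemma subfield_divide: "is_subfield F \<Longrightarrow> x \<in> F \<Longrightarrow> y \<in> F \<Longrightarrow> x / y \<in> F"
  by (simp add: divide_inverse subfield_mult subfield_inverse)

lemma subfield_of_nat: "is_subfield F \<Longrightarrow> of_nat n \<in> F"
  by (induction n) (auto simp: subfield_0 subfield_1 subfield_add)

lemma subfield_power: "is_subfield F \<Longrightarrow> x \<in> F \<Longrightarrow> x ^ n \<in> F"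
  by (induction n) (auto simp: subfield_1 subfield_mult)

lemma subfield_sum: "is_subfield F \<Longrightarrow> (\<And>i. i \<in> A \<Longrightarrow> f i \<in> F) \<Longrightarrow> sum f A \<in> F"
  by (induction A rule: infinite_finite_induct) (auto simp: subfield_0 subfield_add)

lemma subfield_linear_sum:
  assumes F: "is_subfield F" and L: "is_subfield L" and FL: "F \<subseteq> L" and "finite S"
    and lin: "\<And>a x y. a \<in> F \<Longrightarrow> x \<in> L \<Longrightarrow> y \<in> L \<Longrightarrow> f (a * x + y) = a * f x + f y"
    and "\<And>j. j \<in> S \<Longrightarrow> c j \<in> F" and "\<And>j. j \<in> S \<Longrightarrow> y j \<in> L"
  shows "f (\<Sum>j\<in>S. c j * y j) = (\<Sum>j\<in>S. c j * f (y j))"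
  using \<open>finite S\<close> assms(6,7)
proof (induction S rule: finite_induct)
  case empty
  have "f (1 * 0 + 0) = 1 * f 0 + f 0"
    using subfield_0[OF L] subfield_1[OF F] by (intro lin) auto
  then have "f 0 = f 0 + f 0" by (simp only: mult_1 add_0_right)
  then show ?case by (metis add_cancel_left_right sum.empty)
next
  case (insert j S)
  have "(\<Sum>j\<in>S. c j * y j) \<in> L"
    using insert.prems FL by (intro subfield_sum[OF L]) (auto intro!: subfield_mult[OF L])
  moreover have "c j \<in> F" "y j \<in> L" using insert.prems by auto
  ultimately show ?case using insert.IH insert.prems insert.hyps lin by simp
qed

definition lincomb :: "'a::field list \<Rightarrow> (nat \<Rightarrow> 'a) \<Rightarrow> 'a" where
  "lincomb bs c = (\<Sum>i<length bs. c i * bs ! i)"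

lemma lincomb_cong: "(\<And>i. i < length bs \<Longrightarrow> c i = d i) \<Longrightarrow> lincomb bs c = lincomb bs d"
  by (simp add: lincomb_def)

lemma lincomb_diff: "lincomb bs (\<lambda>i. c i - d i) = lincomb bs c - lincomb bs d"
  by (simp add: lincomb_def algebra_simps sum_subtractf)

lemma lincomb_append: "lincomb (bs @ [b]) c = lincomb bs c + c (length bs) * b"
  by (simp add: lincomb_def nth_append)

lemma lincomb_in:
  assumes "is_subfield L" "F \<subseteq> L" "set bs \<subseteq> L" "\<forall>i<length bs. c i \<in> F"
  shows "lincomb bs c \<in> L"
  unfolding lincomb_def using assms by (intro subfield_sum) (auto intro!: subfield_mult)

lemma lin_indep_butlast:
  assumes "is_subfield F" "lin_indep F (bs @ [b])"
  shows "lin_indep F bs"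
  unfolding lin_indep_def
proof (intro allI impI)
  fix c i
  assume c: "\<forall>i<length bs. c i \<in> F" and "(\<Sum>i<length bs. c i * bs ! i) = 0" and i: "i < length bs"
  define c' where "c' j = (if j < length bs then c j else 0)" for j
  have "\<forall>j<length (bs @ [b]). c' j \<in> F" using c subfield_0[OF assms(1)] by (auto simp: c'_def)
  moreover have "lincomb (bs @ [b]) c' = 0"
    using \<open>(\<Sum>i<length bs. c i * bs ! i) = 0\<close> by (simp add: lincomb_append c'_def lincomb_def nth_append)
  ultimately have "\<forall>j<length (bs @ [b]). c' j = 0"
    using assms(2) unfolding lin_indep_def lincomb_def by blast
  then have "c' i = 0" using i by simp
  then show "c i = 0" using i by (simp add: c'_def)
qed

lemma lin_indep_last_notin_span:
  assumes "is_subfield F" "lin_indep F (bs @ [b])" "\<forall>i<length bs. g i \<in> F"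
  shows "b \<noteq> lincomb bs g"
proof
  assume b: "b = lincomb bs g"
  define c' where "c' j = (if j < length bs then g j else - 1)" for j
  have "lincomb bs c' = lincomb bs g" unfolding c'_def by (rule lincomb_cong) simp
  then have "lincomb (bs @ [b]) c' = 0" using b by (simp add: lincomb_append c'_def)
  moreover have "\<forall>j<length (bs @ [b]). c' j \<in> F"
    using assms(3) subfield_uminus[OF assms(1) subfield_1[OF assms(1)]] by (auto simp: c'_def)
  ultimately have "\<forall>j<length (bs @ [b]). c' j = 0"
    using assms(2) unfolding lin_indep_def lincomb_def by blast
  then show False by (auto simp: c'_def)
qed

locale subfield_basis =
  fixes F L :: "'a::field set" and bs :: "'a list"
  assumes subfield_F: "is_subfield F" and subfield_L: "is_subfield L" and F_subset_L: "F \<subseteq> L"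
    and basis: "is_basis F L bs"
begin

lemma basis_in: "set bs \<subseteq> L"
  using basis by (simp add: is_basis_def)

lemma nth_basis_in: "i < length bs \<Longrightarrow> bs ! i \<in> L"
  using basis_in by auto

lemma lincomb_in_L: "\<forall>i<length bs. c i \<in> F \<Longrightarrow> lincomb bs c \<in> L"
  using lincomb_in[OF subfield_L F_subset_L basis_in] .

lemma lincomb_eq_0_imp:
  "\<forall>i<length bs. c i \<in> F \<Longrightarrow> lincomb bs c = 0 \<Longrightarrow> i < length bs \<Longrightarrow> c i = 0"
  using basis unfolding is_basis_def lin_indep_def lincomb_def by blast

lemma lincomb_inj:
  assumes "\<forall>i<length bs. c i \<in> F" "\<forall>i<length bs. d i \<in> F" "lincomb bs c = lincomb bs d"
    and "i < length bs"
  shows "c i = d i"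
proof -
  have "lincomb bs (\<lambda>i. c i - d i) = 0" using assms(3) by (simp add: lincomb_diff)
  moreover have "\<forall>i<length bs. c i - d i \<in> F"
    using assms(1,2) by (simp add: subfield_diff[OF subfield_F])
  ultimately show ?thesis using lincomb_eq_0_imp[of "\<lambda>i. c i - d i", OF _ _ assms(4)] by simp
qed

lemma coords_spec:
  assumes "x \<in> L"
  shows "(\<forall>i<length bs. coords F bs x i \<in> F) \<and> (\<forall>i\<ge>length bs. coords F bs x i = 0)
     \<and> x = lincomb bs (coords F bs x)"
proof -
  obtain c where c: "\<forall>i<length bs. c i \<in> F" "x = lincomb bs c"
    using basis assms unfolding is_basis_def lin_span_def lincomb_def by blast
  define c' where "c' i = (if i < length bs then c i else 0)" for i
  have c': "(\<forall>i<length bs. c' i \<in> F) \<and> (\<forall>i\<ge>length bs. c' i = 0) \<and> x = lincomb bs c'"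
    using c unfolding c'_def by (auto intro: lincomb_cong)
  have "d = c'" if d: "(\<forall>i<length bs. d i \<in> F) \<and> (\<forall>i\<ge>length bs. d i = 0)
      \<and> x = (\<Sum>i<length bs. d i * bs ! i)" for d
  proof
    fix i show "d i = c' i"
      using lincomb_inj[of d c' i] d c' by (cases "i < length bs") (auto simp: lincomb_def)
  qed
  then have "coords F bs x = c'"
    unfolding coords_def using c' by (intro the_equality) (auto simp: lincomb_def)
  then show ?thesis using c' by simp
qed

lemma coords_in: "x \<in> L \<Longrightarrow> coords F bs x i \<in> F"
  using coords_spec[of x] subfield_0[OF subfield_F] by (cases "i < length bs") auto

lemma coords_beyond: "x \<in> L \<Longrightarrow> length bs \<le> i \<Longrightarrow> coords F bs x i = 0"
  using coords_spec by blast

lemma lincomb_coords: "x \<in> L \<Longrightarrow> lincomb bs (coords F bs x) = x"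
  using coords_spec by simp

lemma coords_lincomb:
  assumes "\<forall>i<length bs. c i \<in> F" "i < length bs"
  shows "coords F bs (lincomb bs c) i = c i"
  using lincomb_inj[of "coords F bs (lincomb bs c)" c i] coords_spec[OF lincomb_in_L] assms by auto

lemma coords_linear:
  assumes "a \<in> F" "x \<in> L" "y \<in> L"
  shows "coords F bs (a * x + y) i = a * coords F bs x i + coords F bs y i"
proof (cases "i < length bs")
  case True
  have "lincomb bs (\<lambda>i. a * coords F bs x i + coords F bs y i)
      = a * lincomb bs (coords F bs x) + lincomb bs (coords F bs y)"
    by (simp add: lincomb_def algebra_simps sum.distrib sum_distrib_left)
  then have "a * x + y = lincomb bs (\<lambda>i. a * coords F bs x i + coords F bs y i)"
    using lincomb_coords[OF assms(2)] lincomb_coords[OF assms(3)] by simp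
  moreover have "\<forall>i<length bs. a * coords F bs x i + coords F bs y i \<in> F"
    using assms coords_in subfield_add[OF subfield_F] subfield_mult[OF subfield_F] by blast
  ultimately show ?thesis
    using True coords_lincomb[of "\<lambda>i. a * coords F bs x i + coords F bs y i" i] by simp
next
  case False
  have "a * x + y \<in> L"
    using assms F_subset_L subfield_add[OF subfield_L] subfield_mult[OF subfield_L] by blast
  then show ?thesis
    using False coords_beyond[of _ i] assms(2,3) by (simp only: not_less mult_zero_right add_0)
qed

lemma coords_nth_basis:
  assumes "j < length bs" "i < length bs"
  shows "coords F bs (bs ! j) i = (if i = j then 1 else 0)"
proof -
  have "(\<Sum>i<length bs. (if i = j then 1 else 0) * bs ! i) = (\<Sum>i<length bs. if i = j then bs ! i else 0)"
    by (rule sum.cong) auto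
  then have "bs ! j = lincomb bs (\<lambda>i. if i = j then 1 else 0)"
    using assms by (simp add: lincomb_def)
  then show ?thesis
    using coords_lincomb[of "\<lambda>i. if i = j then 1 else 0" i] assms
      subfield_0[OF subfield_F] subfield_1[OF subfield_F] by simp
qed

lemma linear_eq_0_if_eq_0_on_basis:
  assumes lin: "\<And>a u v. a \<in> F \<Longrightarrow> u \<in> L \<Longrightarrow> v \<in> L \<Longrightarrow> f (a * u + v) = a * f u + f v"
    and basis_0: "\<And>l. l < length bs \<Longrightarrow> f (bs ! l) = 0" and w: "w \<in> L"
  shows "f w = 0"
proof -
  have "f w = f (\<Sum>l<length bs. coords F bs w l * bs ! l)"
    using lincomb_coords[OF w] by (simp add: lincomb_def)
  also have "\<dots> = (\<Sum>l<length bs. coords F bs w l * f (bs ! l))"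
    using w nth_basis_in coords_in
    by (intro subfield_linear_sum[OF subfield_F subfield_L F_subset_L _ lin]) auto
  finally show ?thesis using basis_0 by simp
qed

lemma basis_nonempty: "bs \<noteq> []"
proof
  assume "bs = []"
  then have "lincomb bs (coords F bs 1) = 0" by (simp add: lincomb_def)
  then show False using lincomb_coords[of 1] subfield_1[OF subfield_L] by simp
qed

end

definition ext_basis :: "'a::field set \<Rightarrow> 'a set \<Rightarrow> 'a list" where
  "ext_basis F L = (SOME bs. is_basis F L bs)"

lemma subfield_basis_ext_basis: "finite_ext F L \<Longrightarrow> subfield_basis F L (ext_basis F L)"
  unfolding finite_ext_def subfield_basis_def ext_basis_def by (metis someI_ex)

lemma length_ext_basis: "length (ext_basis F L) = ext_degree F L"
  by (simp add: ext_basis_def ext_degree_def)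

lemma field_trace_ext_basis:
  "field_trace F L x = (\<Sum>i<ext_degree F L. coords F (ext_basis F L) (x * ext_basis F L ! i) i)"
  by (simp add: field_trace_def ext_basis_def ext_degree_def Let_def)

lemma finite_ext_subfields: "finite_ext F L \<Longrightarrow> is_subfield F \<and> is_subfield L \<and> F \<subseteq> L"
  unfolding finite_ext_def by blast

lemma ext_degree_pos: "finite_ext F L \<Longrightarrow> 0 < ext_degree F L"
  using subfield_basis.basis_nonempty[OF subfield_basis_ext_basis, of F L] length_ext_basis[of F L]
  by (metis length_greater_0_conv)

context
  fixes F L :: "'a::field set"
  assumes fe: "finite_ext F L"
begin

interpretation subfield_basis F L "ext_basis F L"
  using subfield_basis_ext_basis[OF fe] .

lemma field_trace_in: "x \<in> L \<Longrightarrow> field_trace F L x \<in> F"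
  unfolding field_trace_ext_basis using nth_basis_in
  by (intro subfield_sum[OF subfield_F] coords_in)
     (auto simp: length_ext_basis intro!: subfield_mult[OF subfield_L])

lemma field_trace_linear:
  assumes "a \<in> F" "x \<in> L" "y \<in> L"
  shows "field_trace F L (a * x + y) = a * field_trace F L x + field_trace F L y"
proof -
  have "coords F (ext_basis F L) ((a * x + y) * ext_basis F L ! i) i
      = a * coords F (ext_basis F L) (x * ext_basis F L ! i) i
        + coords F (ext_basis F L) (y * ext_basis F L ! i) i"
    if "i < ext_degree F L" for i
  proof -
    have "ext_basis F L ! i \<in> L" using nth_basis_in that by (simp add: length_ext_basis)
    then show ?thesis
      using coords_linear[OF assms(1)] assms(2,3) subfield_mult[OF subfield_L]
      by (simp add: distrib_right mult.assoc)
  qed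
  then show ?thesis
    unfolding field_trace_ext_basis by (simp add: sum.distrib sum_distrib_left)
qed

lemma field_trace_sum:
  "finite S \<Longrightarrow> (\<And>j. j \<in> S \<Longrightarrow> c j \<in> F) \<Longrightarrow> (\<And>j. j \<in> S \<Longrightarrow> y j \<in> L) \<Longrightarrow>
    field_trace F L (\<Sum>j\<in>S. c j * y j) = (\<Sum>j\<in>S. c j * field_trace F L (y j))"
  by (rule subfield_linear_sum[OF subfield_F subfield_L F_subset_L _ field_trace_linear])

lemma field_trace_add: "x \<in> L \<Longrightarrow> y \<in> L \<Longrightarrow> field_trace F L (x + y) = field_trace F L x + field_trace F L y"
  using field_trace_linear[of 1 x y] subfield_1[OF subfield_F] by simp

lemma field_trace_one: "field_trace F L 1 = of_nat (ext_degree F L)"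
  unfolding field_trace_ext_basis by (simp add: coords_nth_basis length_ext_basis)

lemma field_trace_zero: "field_trace F L 0 = 0"
  using field_trace_sum[of "{}"] by simp

lemma field_trace_mult: "a \<in> F \<Longrightarrow> x \<in> L \<Longrightarrow> field_trace F L (a * x) = a * field_trace F L x"
  using field_trace_linear[of a x 0] subfield_0[OF subfield_L] field_trace_zero by simp

end

lemma homogeneous_system_nontrivial_solution:
  fixes A :: "nat \<Rightarrow> 'b \<Rightarrow> 'a::field"
  assumes F: "is_subfield F" and "finite J" "e < card J" "\<forall>l<e. \<forall>j\<in>J. A l j \<in> F"
  shows "\<exists>x. (\<forall>j\<in>J. x j \<in> F) \<and> (\<exists>j\<in>J. x j \<noteq> 0) \<and> (\<forall>l<e. (\<Sum>j\<in>J. x j * A l j) = 0)"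
  using assms(2-4)
proof (induction e arbitrary: J A)
  case 0
  then obtain j0 where "j0 \<in> J" by fastforce
  then show ?case
    using F by (intro exI[of _ "\<lambda>j. if j = j0 then 1 else 0"]) (auto simp: subfield_0 subfield_1)
next
  case (Suc e)
  show ?case
  proof (cases "\<forall>j\<in>J. A e j = 0")
    case True
    obtain x where x: "\<forall>j\<in>J. x j \<in> F" "\<exists>j\<in>J. x j \<noteq> 0" "\<forall>l<e. (\<Sum>j\<in>J. x j * A l j) = 0"
      using Suc.IH[of J A] Suc.prems by auto
    then have "\<forall>l<Suc e. (\<Sum>j\<in>J. x j * A l j) = 0" using True less_Suc_eq by auto
    then show ?thesis using x by blast
  next
    case False
    then obtain p where p: "p \<in> J" "A e p \<noteq> 0" by blast
    \<comment> \<open>Gaussian elimination: use equation \<open>e\<close> to eliminate the unknown \<open>x p\<close>.\<close>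
    define J' where "J' = J - {p}"
    define A' where "A' l j = A l j - A l p * A e j / A e p" for l j
    have "e < card J'" using Suc.prems p by (simp add: J'_def card_Diff_singleton)
    moreover have "\<forall>l<e. \<forall>j\<in>J'. A' l j \<in> F"
      using Suc.prems p F by (auto simp: A'_def J'_def intro!: subfield_diff subfield_mult subfield_divide)
    ultimately obtain x' where x': "\<forall>j\<in>J'. x' j \<in> F" "\<exists>j\<in>J'. x' j \<noteq> 0"
        "\<forall>l<e. (\<Sum>j\<in>J'. x' j * A' l j) = 0"
      using Suc.IH[of J' A'] Suc.prems(1) by (auto simp: J'_def)
    define s where "s = (\<Sum>j\<in>J'. x' j * A e j)"
    define x where "x j = (if j = p then - s / A e p else x' j)" for j
    have sum_x: "(\<Sum>j\<in>J. x j * B j) = - s / A e p * B p + (\<Sum>j\<in>J'. x' j * B j)" for B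
    proof -
      have "(\<Sum>j\<in>J. x j * B j) = x p * B p + (\<Sum>j\<in>J'. x j * B j)"
        using p Suc.prems(1) by (simp add: J'_def sum.remove)
      moreover have "(\<Sum>j\<in>J'. x j * B j) = (\<Sum>j\<in>J'. x' j * B j)"
        by (intro sum.cong) (auto simp: J'_def x_def)
      ultimately show ?thesis by (simp add: x_def)
    qed
    have "(\<Sum>j\<in>J. x j * A l j) = 0" if "l < Suc e" for l
    proof (cases "l = e")
      case True
      then show ?thesis using sum_x[of "A e"] p by (simp add: s_def field_simps)
    next
      case False
      then have "l < e" using that by simp
      have "(\<Sum>j\<in>J'. x' j * A' l j) = (\<Sum>j\<in>J'. x' j * A l j) - A l p / A e p * s"
        by (simp add: A'_def s_def algebra_simps sum_subtractf sum_distrib_left sum_divide_distrib)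
      then show ?thesis using sum_x[of "A l"] x'(3) \<open>l < e\<close> by (simp add: field_simps)
    qed
    moreover have "\<forall>j\<in>J. x j \<in> F"
      using x'(1) Suc.prems p F unfolding x_def s_def J'_def
      by (auto intro!: subfield_divide subfield_uminus subfield_sum subfield_mult)
    moreover have "\<exists>j\<in>J. x j \<noteq> 0" using x'(2) by (auto simp: x_def J'_def)
    ultimately show ?thesis by blast
  qed
qed

context
  fixes F L :: "'a::field_char_0 set"
  assumes fe: "finite_ext F L"
begin

interpretation subfield_basis F L "ext_basis F L"
  using subfield_basis_ext_basis[OF fe] .

lemma field_trace_nondegenerate:
  assumes "z \<in> L" "\<And>w. w \<in> L \<Longrightarrow> field_trace F L (z * w) = 0"
  shows "z = 0"
proof (rule ccontr)
  assume "z \<noteq> 0"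
  then have "field_trace F L (z * inverse z) = 0"
    using assms subfield_inverse[OF subfield_L] by blast
  then show False
    using \<open>z \<noteq> 0\<close> field_trace_one[OF fe] ext_degree_pos[OF fe] by simp
qed

text \<open>\<open>z\<close> and \<open>c\<close> come from a nontrivial solution of the \<open>d\<close> linear equations expressing that
  \<open>w \<mapsto> Tr(z w) + c w\<^sub>i\<close> vanishes on the basis, in the \<open>d + 1\<close> unknowns \<open>c\<close> and the coordinates
  of \<open>z\<close>.\<close>

lemma trace_form_coords_relation:
  assumes i: "i < ext_degree F L"
  shows "\<exists>z\<in>L. \<exists>c\<in>F. (z \<noteq> 0 \<or> c \<noteq> 0) \<and>
    (\<forall>w\<in>L. field_trace F L (z * w) + c * coords F (ext_basis F L) w i = 0)"
proof -
  define bs where "bs = ext_basis F L"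
  define d where "d = ext_degree F L"
  have len: "length bs = d" by (simp add: bs_def d_def length_ext_basis)
  have bsL: "j < d \<Longrightarrow> bs ! j \<in> L" for j using nth_basis_in len by (simp add: bs_def)
  have mult_L: "u \<in> L \<Longrightarrow> v \<in> L \<Longrightarrow> u * v \<in> L" for u v using subfield_mult[OF subfield_L] .
  define A where "A l j = (if j < d then field_trace F L (bs ! j * bs ! l) else coords F bs (bs ! l) i)"
    for l j
  have "\<forall>l<d. \<forall>j\<in>{..d}. A l j \<in> F"
    using bsL mult_L field_trace_in[OF fe] coords_in by (auto simp: A_def bs_def)
  then obtain x where xF: "\<forall>j\<in>{..d}. x j \<in> F" and x_nz: "\<exists>j\<in>{..d}. x j \<noteq> 0"
    and x_eq: "\<forall>l<d. (\<Sum>j\<in>{..d}. x j * A l j) = 0"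
    using homogeneous_system_nontrivial_solution[OF subfield_F, of "{..d}" d A] by auto
  have xF': "\<forall>j<length bs. x j \<in> F" using xF len by auto
  define z where "z = lincomb bs x"
  have zL: "z \<in> L" using lincomb_in_L xF' by (simp add: z_def bs_def)
  define f where "f w = field_trace F L (z * w) + x d * coords F bs w i" for w
  have f_linear: "f (a * u + v) = a * f u + f v" if "a \<in> F" "u \<in> L" "v \<in> L" for a u v
  proof -
    have "z * (a * u + v) = a * (z * u) + z * v" by (simp add: algebra_simps)
    then show ?thesis
      using that zL mult_L field_trace_linear[OF fe, of a "z * u" "z * v"] coords_linear[of a u v]
      by (simp add: f_def bs_def algebra_simps)
  qed
  have f_basis: "f (bs ! l) = 0" if "l < length bs" for l
  proof -
    have "z * bs ! l = (\<Sum>j<d. x j * (bs ! j * bs ! l))"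
      by (simp add: z_def lincomb_def len sum_distrib_right mult.assoc)
    then have "field_trace F L (z * bs ! l) = (\<Sum>j<d. x j * field_trace F L (bs ! j * bs ! l))"
      using field_trace_sum[OF fe, of "{..<d}" x "\<lambda>j. bs ! j * bs ! l"] xF bsL mult_L that len by auto
    then show ?thesis
      using x_eq that len by (simp add: f_def A_def lessThan_Suc_atMost[symmetric])
  qed
  have "z \<noteq> 0 \<or> x d \<noteq> 0"
  proof (rule ccontr)
    assume zero: "\<not> (z \<noteq> 0 \<or> x d \<noteq> 0)"
    then have "x j = 0" if "j < d" for j
      using lincomb_eq_0_imp[of x j, folded bs_def] xF' that by (simp add: z_def len)
    then show False using x_nz zero by (auto simp: le_less)
  qed
  moreover have "\<forall>w\<in>L. f w = 0"
    using linear_eq_0_if_eq_0_on_basis[of f, folded bs_def, OF f_linear f_basis] by blast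
  ultimately show ?thesis using zL xF by (auto simp: f_def bs_def)
qed

lemma coords_as_field_trace:
  assumes "i < ext_degree F L"
  shows "\<exists>\<xi>\<in>L. \<forall>w\<in>L. coords F (ext_basis F L) w i = field_trace F L (\<xi> * w)"
proof -
  obtain z c where zL: "z \<in> L" and "c \<in> F" and nz: "z \<noteq> 0 \<or> c \<noteq> 0"
    and rel: "\<And>w. w \<in> L \<Longrightarrow> field_trace F L (z * w) + c * coords F (ext_basis F L) w i = 0"
    using trace_form_coords_relation[OF assms] by blast
  have "c \<noteq> 0"
  proof
    assume "c = 0"
    then have "z = 0" using field_trace_nondegenerate[OF zL] rel by simp
    then show False using nz \<open>c = 0\<close> by simp
  qed
  have "- inverse c \<in> F"
    using \<open>c \<in> F\<close> subfield_uminus[OF subfield_F] subfield_inverse[OF subfield_F] by blast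
  then have "- inverse c * z \<in> L" using zL F_subset_L subfield_mult[OF subfield_L] by blast
  moreover have "coords F (ext_basis F L) w i = field_trace F L (- inverse c * z * w)" if "w \<in> L" for w
  proof -
    have "field_trace F L (- inverse c * z * w) = - inverse c * field_trace F L (z * w)"
      using field_trace_mult[OF fe \<open>- inverse c \<in> F\<close>, of "z * w"] zL that subfield_mult[OF subfield_L]
      by (simp add: mult.assoc)
    also have "\<dots> = coords F (ext_basis F L) w i"
      using rel[OF that] \<open>c \<noteq> 0\<close> by (simp add: eq_neg_iff_add_eq_0[symmetric] field_simps)
    finally show ?thesis by simp
  qed
  ultimately show ?thesis by blast
qed

end

lemma ext_degree_self:
  assumes L: "is_subfield L"
  shows "finite_ext L L" and "ext_degree L L = 1"
proof -
  have "is_basis L L [1]"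
    using L by (auto simp: is_basis_def lin_indep_def lin_span_def subfield_1)
  then show fe: "finite_ext L L" using L by (auto simp: finite_ext_def)
  interpret subfield_basis L L "ext_basis L L"
    using subfield_basis_ext_basis[OF fe] .
  define bs where "bs = ext_basis L L"
  have indep: "lin_indep L bs" using basis by (simp add: is_basis_def bs_def)
  have "length bs \<noteq> 0" using basis_nonempty by (simp add: bs_def)
  moreover have "\<not> 2 \<le> length bs"
  proof
    assume len: "2 \<le> length bs"
    have pos: "0 < length bs" "1 < length bs" using len by linarith+
    then have b01: "bs ! 0 \<in> L" "bs ! 1 \<in> L" using nth_basis_in[folded bs_def] by blast+
    \<comment> \<open>two elements of \<open>L\<close> are always \<open>L\<close>-linearly dependent\<close>
    define c where "c j = (if bs ! 0 = 0 then (if j = 0 then 1 else 0)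
      else if j = 0 then bs ! 1 else if j = 1 then - bs ! 0 else 0)" for j :: nat
    have "(\<Sum>j<length bs. c j * bs ! j) = (\<Sum>j\<in>{0, 1::nat}. c j * bs ! j)"
      using len by (intro sum.mono_neutral_right) (auto simp: c_def)
    then have "(\<Sum>j<length bs. c j * bs ! j) = 0" by (simp add: c_def)
    moreover have "\<forall>j<length bs. c j \<in> L"
      using b01 L by (auto simp: c_def subfield_0 subfield_1 subfield_uminus)
    ultimately have "\<forall>j<length bs. c j = 0" using indep by (simp add: lin_indep_def)
    then have "c 0 = 0" "c 1 = 0" using pos by blast+
    then show False by (simp add: c_def split: if_splits)
  qed
  ultimately show "ext_degree L L = 1" by (simp add: bs_def length_ext_basis)
qed

lemma field_trace_self:
  assumes L: "is_subfield L" and x: "x \<in> L"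
  shows "field_trace L L x = x"
  using field_trace_mult[OF ext_degree_self(1)[OF L] x subfield_1[OF L]]
    field_trace_one[OF ext_degree_self(1)[OF L]] ext_degree_self(2)[OF L] by simp

section \<open>Non-Archimedean absolute values\<close>

locale nonarch_abs =
  fixes F :: "'a::field set" and a :: "'a \<Rightarrow> real"
  assumes subfield: "is_subfield F" and nonarch: "nonarch_absval F a"
begin

lemma nonneg: "x \<in> F \<Longrightarrow> 0 \<le> a x"
  and zero_iff: "x \<in> F \<Longrightarrow> a x = 0 \<longleftrightarrow> x = 0"
  and mult: "x \<in> F \<Longrightarrow> y \<in> F \<Longrightarrow> a (x * y) = a x * a y"
  and add_le_max: "x \<in> F \<Longrightarrow> y \<in> F \<Longrightarrow> a (x + y) \<le> max (a x) (a y)"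
  using nonarch by (simp_all add: nonarch_absval_def)

lemma abs_eq: "x \<in> F \<Longrightarrow> \<bar>a x\<bar> = a x"
  using nonneg by simp

lemma zero [simp]: "a 0 = 0"
  using zero_iff subfield_0[OF subfield] by blast

lemma one [simp]: "a 1 = 1"
proof -
  have "a 1 = a 1 * a 1" using mult[of 1 1] subfield_1[OF subfield] by simp
  moreover have "a 1 \<noteq> 0" using zero_iff[of 1] subfield_1[OF subfield] by simp
  ultimately show ?thesis by (metis mult_cancel_right1)
qed

lemma minus: "x \<in> F \<Longrightarrow> a (- x) = a x"
proof -
  assume x: "x \<in> F"
  have m1: "-1 \<in> F" using subfield_uminus[OF subfield subfield_1[OF subfield]] .
  have "a (-1) * a (-1) = 1" using mult[OF m1 m1] by simp
  then have "(a (-1) - 1) * (a (-1) + 1) = 0" by (simp add: algebra_simps)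
  moreover have "a (-1) + 1 \<noteq> 0" using nonneg[OF m1] by linarith
  ultimately have "a (-1) = 1" by simp
  then show ?thesis using mult[OF m1 x] by simp
qed

lemma minus_commute: "x \<in> F \<Longrightarrow> y \<in> F \<Longrightarrow> a (x - y) = a (y - x)"
  using minus[of "x - y"] subfield_diff[OF subfield] by simp

lemma diff_le_max: "x \<in> F \<Longrightarrow> y \<in> F \<Longrightarrow> a (x - y) \<le> max (a x) (a y)"
  using add_le_max[of x "- y"] minus[of y] subfield_uminus[OF subfield] by simp

lemma diff_le_max_diff: "x \<in> F \<Longrightarrow> y \<in> F \<Longrightarrow> z \<in> F \<Longrightarrow> a (x - z) \<le> max (a (x - y)) (a (y - z))"
  using add_le_max[of "x - y" "y - z"] subfield_diff[OF subfield] by simp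

lemma add_le: "x \<in> F \<Longrightarrow> y \<in> F \<Longrightarrow> a (x + y) \<le> a x + a y"
  using add_le_max[of x y] nonneg[of x] nonneg[of y] by simp

lemma sum_le: "(\<And>i. i \<in> S \<Longrightarrow> f i \<in> F) \<Longrightarrow> a (sum f S) \<le> (\<Sum>i\<in>S. a (f i))"
proof (induction S rule: infinite_finite_induct)
  case (insert j S)
  have "a (f j + sum f S) \<le> a (f j) + a (sum f S)"
    using insert.prems by (intro add_le) (auto intro!: subfield_sum[OF subfield])
  then show ?case using insert by simp
qed simp_all

lemma sum_mult_le:
  assumes "\<And>i. i \<in> S \<Longrightarrow> c i \<in> F" "\<And>i. i \<in> S \<Longrightarrow> b i \<in> F"
  shows "a (\<Sum>i\<in>S. c i * b i) \<le> (\<Sum>i\<in>S. a (c i) * a (b i))"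
  using sum_le[of S "\<lambda>i. c i * b i"] assms mult subfield_mult[OF subfield] by simp

lemma power: "x \<in> F \<Longrightarrow> a (x ^ n) = a x ^ n"
  by (induction n) (simp_all add: mult subfield_power[OF subfield])

lemma inverse: "x \<in> F \<Longrightarrow> a (inverse x) = inverse (a x)"
proof (cases "x = 0")
  case False
  assume x: "x \<in> F"
  have "a x * a (inverse x) = 1"
    using mult[OF x subfield_inverse[OF subfield x]] False by simp
  then show ?thesis by (simp add: inverse_unique)
qed simp

definition disc :: "'a \<Rightarrow> real \<Rightarrow> 'a set" where
  "disc x r = {z \<in> F. a (z - x) < r}"

lemma topspace_k_top [simp]: "topspace (k_top F a) = F"
  by (auto simp: k_top_def)

lemma openin_disc: "x \<in> F \<Longrightarrow> 0 < r \<Longrightarrow> openin (k_top F a) (disc x r)"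
  unfolding k_top_def disc_def by (rule topology_generated_by_Basis) blast

lemma disc_recentre: "y \<in> disc x r \<Longrightarrow> x \<in> F \<Longrightarrow> disc y r \<subseteq> disc x r"
  using diff_le_max_diff by (fastforce simp: disc_def)

lemma openin_k_top_contains_disc:
  assumes "openin (k_top F a) U" "x \<in> U"
  shows "\<exists>r>0. disc x r \<subseteq> U"
proof -
  have "generate_topology_on (insert F {{z \<in> F. a (z - x) < r} | x r. x \<in> F \<and> r > 0}) U"
    using assms(1) unfolding k_top_def by (rule openin_topology_generated_by)
  then show ?thesis using assms(2)
  proof (induction arbitrary: x)
    case (Int A B)
    obtain r1 where "r1 > 0" "disc x r1 \<subseteq> A" using Int.IH(1)[of x] Int.prems by blast
    moreover obtain r2 where "r2 > 0" "disc x r2 \<subseteq> B" using Int.IH(2)[of x] Int.prems by blast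
    ultimately show ?case by (intro exI[of _ "min r1 r2"]) (auto simp: disc_def)
  next
    case (UN KK)
    then show ?case by blast
  next
    case (Basis s)
    show ?case
    proof (cases "s = F")
      case True
      then show ?thesis by (intro exI[of _ 1]) (auto simp: disc_def)
    next
      case False
      then obtain c r where s: "s = disc c r" "c \<in> F" "r > 0"
        using Basis by (auto simp: disc_def)
      then show ?thesis using Basis.prems disc_recentre by blast
    qed
  qed simp
qed

lemma continuous_map_k_topI:
  assumes "f \<in> topspace X \<rightarrow> F"
    and small: "\<And>y \<rho>. y \<in> topspace X \<Longrightarrow> 0 < \<rho> \<Longrightarrow>
      \<exists>V. openin X V \<and> y \<in> V \<and> (\<forall>z\<in>V. a (f z - f y) < \<rho>)"
  shows "continuous_map X (k_top F a) f"
  unfolding k_top_def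
proof (rule continuous_on_generated_topo)
  fix U assume "U \<in> insert F {{z \<in> F. a (z - x) < r} | x r. x \<in> F \<and> 0 < r}"
  then consider "U = F" | x r where "U = disc x r" "x \<in> F"
    by (auto simp: disc_def)
  then show "openin X (f -` U \<inter> topspace X)"
  proof cases
    case 1
    then have "f -` U \<inter> topspace X = topspace X" using assms(1) by auto
    then show ?thesis by simp
  next
    case (2 x r)
    show ?thesis
    proof (subst openin_subopen, intro ballI)
      fix y assume y: "y \<in> f -` U \<inter> topspace X"
      then have "a (f y - x) < r" "f y \<in> F" using 2 by (auto simp: disc_def)
      then have "0 < r" using nonneg[of "f y - x"] subfield_diff[OF subfield] 2 by fastforce
      then obtain V where V: "openin X V" "y \<in> V" "\<forall>z\<in>V. a (f z - f y) < r"
        using small[of y r] y by blast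
      have "V \<subseteq> f -` U \<inter> topspace X"
      proof
        fix z assume "z \<in> V"
        then have "z \<in> topspace X" using V(1) openin_subset by blast
        then have "f z \<in> disc (f y) r" using V(3) \<open>z \<in> V\<close> assms(1) by (auto simp: disc_def)
        then show "z \<in> f -` U \<inter> topspace X"
          using disc_recentre[of "f y" x r] y \<open>z \<in> topspace X\<close> 2 by blast
      qed
      then show "\<exists>T. openin X T \<and> y \<in> T \<and> T \<subseteq> f -` U \<inter> topspace X" using V by blast
    qed
  qed
next
  show "f ` topspace X \<subseteq> \<Union> (insert F {{z \<in> F. a (z - x) < r} | x r. x \<in> F \<and> 0 < r})"
    using assms(1) by auto
qed

lemma continuous_map_scaled_diff:
  assumes f: "continuous_map X (k_top F a) f" and g: "continuous_map X (k_top F a) g" and c: "c \<in> F"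
  shows "continuous_map X (k_top F a) (\<lambda>x. c * (f x - g x))"
proof (rule continuous_map_k_topI)
  have fg: "f x \<in> F" "g x \<in> F" if "x \<in> topspace X" for x
    using funcset_mem[OF continuous_map_funspace[OF f] that]
      funcset_mem[OF continuous_map_funspace[OF g] that] by simp_all
  then show "(\<lambda>x. c * (f x - g x)) \<in> topspace X \<rightarrow> F"
    using subfield_mult[OF subfield c] subfield_diff[OF subfield] by simp
  fix y and \<rho> :: real
  assume y: "y \<in> topspace X" and "0 < \<rho>"
  define \<epsilon> where "\<epsilon> = \<rho> / (a c + 1)"
  have "0 \<le> a c" using nonneg[OF c] .
  then have "0 < \<epsilon>" "a c * \<epsilon> < \<rho>" using \<open>0 < \<rho>\<close> by (simp_all add: \<epsilon>_def field_simps)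
  define V where "V = {x \<in> topspace X. f x \<in> disc (f y) \<epsilon>} \<inter> {x \<in> topspace X. g x \<in> disc (g y) \<epsilon>}"
  have "openin X V"
    unfolding V_def using fg[OF y] \<open>0 < \<epsilon>\<close>
    by (intro openin_Int openin_continuous_map_preimage[OF f] openin_continuous_map_preimage[OF g]
        openin_disc) auto
  moreover have "y \<in> V" using y fg[OF y] \<open>0 < \<epsilon>\<close> by (simp add: V_def disc_def)
  moreover have "a (c * (f z - g z) - c * (f y - g y)) < \<rho>" if "z \<in> V" for z
  proof -
    define u1 where "u1 = f z - f y"
    define u2 where "u2 = g z - g y"
    have u: "u1 \<in> F" "u2 \<in> F" "a u1 < \<epsilon>" "a u2 < \<epsilon>"
      using that fg[OF y] by (auto simp: V_def disc_def u1_def u2_def intro!: subfield_diff[OF subfield])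
    have "a (c * (f z - g z) - c * (f y - g y)) = a c * a (u1 - u2)"
      using mult[OF c subfield_diff[OF subfield u(1,2)]] by (simp add: u1_def u2_def algebra_simps)
    also have "\<dots> \<le> a c * \<epsilon>"
      using diff_le_max[OF u(1,2)] u(3,4) \<open>0 \<le> a c\<close> by (intro mult_left_mono) auto
    finally show ?thesis using \<open>a c * \<epsilon> < \<rho>\<close> by simp
  qed
  ultimately show "\<exists>V. openin X V \<and> y \<in> V \<and> (\<forall>z\<in>V. a (c * (f z - g z) - c * (f y - g y)) < \<rho>)"
    by blast
qed

end

lemma powr_less_powr_iff: "0 < s \<Longrightarrow> 0 \<le> x \<Longrightarrow> 0 \<le> y \<Longrightarrow> x powr s < y powr s \<longleftrightarrow> x < y"
  for s x y :: real
  using powr_less_mono2[of s x y] powr_mono2[of s y x] by force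

lemma exists_pos_powr_mult_less:
  fixes T M s :: real
  assumes "0 < T" "0 \<le> M" "0 < s"
  shows "\<exists>\<delta>>0. \<delta> powr s * M < T"
proof -
  define \<delta> where "\<delta> = (T / (M + 1)) powr (1 / s)"
  have "\<delta> powr s = T / (M + 1)" using assms by (simp add: \<delta>_def powr_powr)
  moreover have "T / (M + 1) * M < T" using assms by (simp add: field_simps)
  moreover have "0 < \<delta>" using assms by (simp add: \<delta>_def)
  ultimately show ?thesis by auto
qed

locale abs_extension =
  fixes F L :: "'a::field set" and a a0 :: "'a \<Rightarrow> real" and s :: real
  assumes subfield_F: "is_subfield F" and subfield_L: "is_subfield L" and F_subset_L: "F \<subseteq> L"
    and nonarch_L: "nonarch_absval L a" and nonarch_F: "nonarch_absval F a0"
    and complete: "complete_absval F a0" and s_pos: "0 < s"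
    and restrict: "\<forall>x\<in>F. a x = a0 x powr s"
begin

sublocale A: nonarch_abs L a using subfield_L nonarch_L by (simp add: nonarch_abs_def)
sublocale A0: nonarch_abs F a0 using subfield_F nonarch_F by (simp add: nonarch_abs_def)

lemma abs_less_powr_iff: "x \<in> F \<Longrightarrow> 0 \<le> e \<Longrightarrow> a x < e powr s \<longleftrightarrow> a0 x < e"
  using restrict powr_less_powr_iff[OF s_pos] A0.nonneg by simp

lemma restrict_complete:
  assumes u: "\<And>n. u n \<in> F" and cauchy: "\<forall>e>0. \<exists>N. \<forall>m\<ge>N. \<forall>n\<ge>N. a (u m - u n) < e"
  shows "\<exists>l\<in>F. (\<lambda>n. a (u n - l)) \<longlonglongrightarrow> 0"
proof -
  have diff_F: "u m - l \<in> F" if "l \<in> F" for m l using subfield_diff[OF subfield_F u that] .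
  have "\<exists>N::nat. \<forall>m\<ge>N. \<forall>n\<ge>N. a0 (u m - u n) < e" if "e > 0" for e
    using cauchy[rule_format, of "e powr s"] that abs_less_powr_iff diff_F u by simp
  then obtain l where l: "l \<in> F" "\<forall>e>0. \<exists>N::nat. \<forall>n\<ge>N. a0 (u n - l) < e"
    using complete u unfolding complete_absval_def by blast
  have "\<exists>N. \<forall>n\<ge>N. a (u n - l) < e" if "e > 0" for e
  proof -
    obtain N where "\<forall>n\<ge>N. a0 (u n - l) < e powr (1 / s)" using l(2)[rule_format, of "e powr (1 / s)"] \<open>e > 0\<close> by auto
    then have "\<forall>n\<ge>N. a (u n - l) < (e powr (1 / s)) powr s"
      using abs_less_powr_iff diff_F[OF l(1)] by simp
    then show ?thesis using \<open>e > 0\<close> s_pos by (auto simp: powr_powr)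
  qed
  moreover have "\<bar>a (u n - l)\<bar> = a (u n - l)" for n
    using A.nonneg[of "u n - l"] diff_F[OF l(1), of n] F_subset_L by auto
  ultimately have "(\<lambda>n. a (u n - l)) \<longlonglongrightarrow> 0" by (simp add: lim_sequentially dist_real_def)
  then show ?thesis using l(1) by blast
qed

lemma lincomb_tendsto:
  assumes bs: "set bs \<subseteq> L" and cc: "\<And>k i. i < length bs \<Longrightarrow> cc k i \<in> F"
    and g: "\<And>i. i < length bs \<Longrightarrow> g i \<in> F"
    and lim: "\<And>i. i < length bs \<Longrightarrow> (\<lambda>k. a (cc k i - g i)) \<longlonglongrightarrow> 0"
  shows "(\<lambda>k. a (lincomb bs (cc k) - lincomb bs g)) \<longlonglongrightarrow> 0"
proof -
  have diff_L: "cc k i - g i \<in> L" "bs ! i \<in> L" if "i < length bs" for k i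
    using cc g that bs F_subset_L subfield_diff[OF subfield_F] by auto
  have "a (lincomb bs (cc k) - lincomb bs g) \<le> (\<Sum>i<length bs. a (cc k i - g i) * a (bs ! i))" for k
  proof -
    have "lincomb bs (cc k) - lincomb bs g = (\<Sum>i<length bs. (cc k i - g i) * bs ! i)"
      by (simp add: lincomb_def sum_subtractf algebra_simps)
    then show ?thesis
      using A.sum_mult_le[of "{..<length bs}" "\<lambda>i. cc k i - g i" "(!) bs"] diff_L by simp
  qed
  moreover have "lincomb bs (cc k) - lincomb bs g \<in> L" for k
    using lincomb_in[OF subfield_L F_subset_L bs] cc g subfield_diff[OF subfield_L] by simp
  ultimately have "\<forall>k. norm (a (lincomb bs (cc k) - lincomb bs g))
      \<le> (\<Sum>i<length bs. a (cc k i - g i) * a (bs ! i))"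
    by (simp add: A.abs_eq)
  moreover have "(\<lambda>k. \<Sum>i<length bs. a (cc k i - g i) * a (bs ! i)) \<longlonglongrightarrow> 0"
    using lim by (intro tendsto_null_sum tendsto_mult_left_zero) auto
  ultimately show ?thesis by (rule Lim_null_comparison[OF always_eventually])
qed

lemma coeffs_converge:
  assumes bs: "set bs \<subseteq> L" and b: "b \<in> L" and "0 < C"
    and bound: "\<And>c i. \<forall>i<length bs. c i \<in> F \<Longrightarrow> i < length bs \<Longrightarrow> a (c i) \<le> C * a (lincomb bs c)"
    and cc: "\<And>k i. i < length bs \<Longrightarrow> cc k i \<in> F"
    and lim: "(\<lambda>k. a (b - lincomb bs (cc k))) \<longlonglongrightarrow> 0"
    and i: "i < length bs"
  shows "\<exists>g\<in>F. (\<lambda>k. a (cc k i - g)) \<longlonglongrightarrow> 0"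
proof -
  define w where "w k = lincomb bs (cc k)" for k
  have bw: "b - w k \<in> L" for k
    using subfield_diff[OF subfield_L b] lincomb_in[OF subfield_L F_subset_L bs] cc by (simp add: w_def)
  have "\<exists>N. \<forall>m\<ge>N. \<forall>n\<ge>N. a (cc m i - cc n i) < e" if "e > 0" for e
  proof -
    obtain N where N: "\<forall>k\<ge>N. a (b - w k) < e / C"
      using lim \<open>e > 0\<close> \<open>0 < C\<close> A.nonneg[OF bw]
      by (force simp: lim_sequentially dist_real_def w_def)
    have "a (cc m i - cc n i) < e" if "N \<le> m" "N \<le> n" for m n
    proof -
      have "a (cc m i - cc n i) \<le> C * a (lincomb bs (\<lambda>j. cc m j - cc n j))"
        using bound[of "\<lambda>j. cc m j - cc n j" i] cc i by (simp add: subfield_diff[OF subfield_F])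
      also have "\<dots> = C * a ((b - w n) - (b - w m))" by (simp add: w_def lincomb_diff)
      also have "\<dots> \<le> C * max (a (b - w n)) (a (b - w m))"
        using A.diff_le_max[OF bw bw] \<open>0 < C\<close> by simp
      also have "\<dots> < C * (e / C)" using N that \<open>0 < C\<close> by (intro mult_strict_left_mono) auto
      finally show ?thesis using \<open>0 < C\<close> by simp
    qed
    then show ?thesis by blast
  qed
  then show ?thesis using restrict_complete[of "\<lambda>k. cc k i"] cc[OF i] by blast
qed

lemma lincomb_limit_in_span:
  assumes bs: "set bs \<subseteq> L" and b: "b \<in> L" and "0 < C"
    and bound: "\<And>c i. \<forall>i<length bs. c i \<in> F \<Longrightarrow> i < length bs \<Longrightarrow> a (c i) \<le> C * a (lincomb bs c)"
    and cc: "\<And>k i. i < length bs \<Longrightarrow> cc k i \<in> F"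
    and lim: "(\<lambda>k. a (b - lincomb bs (cc k))) \<longlonglongrightarrow> 0"
  shows "\<exists>g. (\<forall>i<length bs. g i \<in> F) \<and> b = lincomb bs g"
proof -
  obtain g where g: "\<And>i. i < length bs \<Longrightarrow> g i \<in> F"
    "\<And>i. i < length bs \<Longrightarrow> (\<lambda>k. a (cc k i - g i)) \<longlonglongrightarrow> 0"
    using coeffs_converge[OF bs b \<open>0 < C\<close> bound cc lim] by metis
  define w where "w k = lincomb bs (cc k)" for k
  define w0 where "w0 = lincomb bs g"
  have wL: "w k \<in> L" for k using lincomb_in[OF subfield_L F_subset_L bs] cc by (simp add: w_def)
  have w0L: "w0 \<in> L" using lincomb_in[OF subfield_L F_subset_L bs] g(1) by (simp add: w0_def)
  have "(\<lambda>k. a (b - w k) + a (w k - w0)) \<longlonglongrightarrow> 0 + 0"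
    using tendsto_add[OF lim lincomb_tendsto[OF bs cc g]] by (simp add: w_def w0_def)
  moreover have "a (b - w0) \<le> a (b - w k) + a (w k - w0)" for k
    using A.add_le[OF subfield_diff[OF subfield_L b wL[of k]] subfield_diff[OF subfield_L wL[of k] w0L]]
    by simp
  ultimately have "a (b - w0) \<le> 0"
    using LIMSEQ_le[OF tendsto_const[of "a (b - w0)"]] by auto
  then have "b = w0"
    using A.nonneg A.zero_iff b w0L subfield_diff[OF subfield_L] by force
  then show ?thesis using g(1) by (auto simp: w0_def)
qed

lemma dist_to_span_pos:
  assumes bs: "set bs \<subseteq> L" and b: "b \<in> L" and indep: "lin_indep F (bs @ [b])" and "0 < C"
    and bound: "\<And>c i. \<forall>i<length bs. c i \<in> F \<Longrightarrow> i < length bs \<Longrightarrow> a (c i) \<le> C * a (lincomb bs c)"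
  shows "\<exists>\<delta>>0. \<forall>g. (\<forall>i<length bs. g i \<in> F) \<longrightarrow> \<delta> \<le> a (b - lincomb bs g)"
proof (rule ccontr)
  assume "\<not> ?thesis"
  then have "\<forall>k::nat. \<exists>g. (\<forall>i<length bs. g i \<in> F) \<and> a (b - lincomb bs g) < inverse (Suc k)"
    by (metis not_le of_nat_0_less_iff positive_imp_inverse_positive zero_less_Suc)
  then obtain cc where cc: "\<And>k i. i < length bs \<Longrightarrow> cc k i \<in> F"
    and small: "\<And>k. a (b - lincomb bs (cc k)) < inverse (Suc k)"
    by metis
  have "(\<lambda>k. a (b - lincomb bs (cc k))) \<longlonglongrightarrow> 0"
    using small A.nonneg b lincomb_in[OF subfield_L F_subset_L bs] cc subfield_diff[OF subfield_L]
    by (intro Lim_null_comparison[OF _ LIMSEQ_inverse_real_of_nat] always_eventually)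
       (auto intro: less_imp_le)
  then obtain g where "\<forall>i<length bs. g i \<in> F" "b = lincomb bs g"
    using lincomb_limit_in_span[of bs b C cc] bs b \<open>0 < C\<close> bound cc by blast
  then show False using lin_indep_last_notin_span[OF subfield_F indep] by blast
qed

lemma lincomb_snoc_bounds:
  assumes bs: "set bs \<subseteq> L" and b: "b \<in> L" and "0 < \<delta>"
    and \<delta>: "\<forall>g. (\<forall>i<length bs. g i \<in> F) \<longrightarrow> \<delta> \<le> a (b - lincomb bs g)"
    and c: "\<forall>i\<le>length bs. c i \<in> F"
  defines "x \<equiv> lincomb (bs @ [b]) c"
  shows "a (c (length bs)) \<le> a x / \<delta>" and "a (lincomb bs c) \<le> a x * (1 + a b / \<delta>)"
proof -
  let ?d = "length bs"
  have cF: "\<forall>i<?d. c i \<in> F" and cd: "c ?d \<in> L" using c F_subset_L by auto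
  have x: "x = lincomb bs c + c ?d * b" by (simp add: x_def lincomb_append)
  have lcL: "lincomb bs c \<in> L" using lincomb_in[OF subfield_L F_subset_L bs cF] .
  have xL: "x \<in> L" using x lcL cd b subfield_add[OF subfield_L] subfield_mult[OF subfield_L] by simp
  have ab: "0 \<le> a b" and ax: "0 \<le> a x" using A.nonneg b xL by auto
  show *: "a (c ?d) \<le> a x / \<delta>"
  proof (cases "c ?d = 0")
    case False
    define g where "g j = - c j / c ?d" for j
    have gF: "\<forall>j<?d. g j \<in> F"
      using cF c subfield_divide[OF subfield_F] subfield_uminus[OF subfield_F] by (auto simp: g_def)
    have "lincomb bs g = - lincomb bs c / c ?d"
      by (simp add: g_def lincomb_def sum_divide_distrib sum_negf)
    then have "x = c ?d * (b - lincomb bs g)" using x False by (simp add: field_simps)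
    then have "a x = a (c ?d) * a (b - lincomb bs g)"
      using A.mult cd b lincomb_in[OF subfield_L F_subset_L bs gF] subfield_diff[OF subfield_L] by simp
    then have "a (c ?d) * \<delta> \<le> a x"
      using \<delta> gF A.nonneg[OF cd] by (metis mult_left_mono)
    then show ?thesis using \<open>0 < \<delta>\<close> by (simp add: field_simps)
  qed (use ax \<open>0 < \<delta>\<close> in simp)
  have "a (lincomb bs c) \<le> max (a x) (a (c ?d * b))"
    using A.diff_le_max[of x "c ?d * b"] xL cd b subfield_mult[OF subfield_L] x by simp
  also have "a (c ?d * b) \<le> a x / \<delta> * a b"
    using A.mult[OF cd b] mult_right_mono[OF * ab] by simp
  also have "max (a x) (a x / \<delta> * a b) \<le> a x * (1 + a b / \<delta>)"
    using ax ab \<open>0 < \<delta>\<close> by (simp add: field_simps)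
  finally show "a (lincomb bs c) \<le> a x * (1 + a b / \<delta>)" by simp
qed

text \<open>Equivalence of norms on a finite-dimensional space over a complete field, by induction on
  the number of vectors.\<close>

lemma lincomb_coeff_bound:
  "set bs \<subseteq> L \<Longrightarrow> lin_indep F bs \<Longrightarrow>
    \<exists>C>0. \<forall>c. (\<forall>i<length bs. c i \<in> F) \<longrightarrow> (\<forall>i<length bs. a (c i) \<le> C * a (lincomb bs c))"
proof (induction bs rule: rev_induct)
  case (snoc b bs)
  have bs: "set bs \<subseteq> L" and b: "b \<in> L" using snoc.prems by auto
  obtain C0 where "C0 > 0"
    and C0: "\<And>c i. \<forall>i<length bs. c i \<in> F \<Longrightarrow> i < length bs \<Longrightarrow> a (c i) \<le> C0 * a (lincomb bs c)"
    using snoc.IH[OF bs lin_indep_butlast[OF subfield_F snoc.prems(2)]] by blast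
  obtain \<delta> where "0 < \<delta>" and \<delta>: "\<forall>g. (\<forall>i<length bs. g i \<in> F) \<longrightarrow> \<delta> \<le> a (b - lincomb bs g)"
    using dist_to_span_pos[OF bs b snoc.prems(2) \<open>C0 > 0\<close> C0] by blast
  define C where "C = max (1 / \<delta>) (C0 * (1 + a b / \<delta>))"
  have "0 < C" using \<open>0 < \<delta>\<close> by (simp add: C_def less_max_iff_disj)
  moreover have "a (c i) \<le> C * a (lincomb (bs @ [b]) c)"
    if c: "\<forall>i<length (bs @ [b]). c i \<in> F" and i: "i < length (bs @ [b])" for c i
  proof -
    let ?x = "lincomb (bs @ [b]) c"
    have c': "\<forall>i\<le>length bs. c i \<in> F" using c by auto
    have ax: "0 \<le> a ?x"
      using A.nonneg lincomb_in[OF subfield_L F_subset_L] snoc.prems(1) c by blast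
    note bounds = lincomb_snoc_bounds[OF bs b \<open>0 < \<delta>\<close> \<delta> c']
    show ?thesis
    proof (cases "i = length bs")
      case True
      have "1 / \<delta> \<le> C" by (simp add: C_def)
      then have "a ?x / \<delta> \<le> C * a ?x" using mult_right_mono[OF _ ax] by fastforce
      then show ?thesis using bounds(1) True by simp
    next
      case False
      then have "i < length bs" using i by simp
      then have "a (c i) \<le> C0 * a (lincomb bs c)" using C0 c by auto
      also have "\<dots> \<le> C0 * (1 + a b / \<delta>) * a ?x"
        using bounds(2) \<open>C0 > 0\<close> by (simp add: mult.assoc mult.commute[of "a ?x"])
      also have "\<dots> \<le> C * a ?x" using ax by (simp add: C_def mult_right_mono)
      finally show ?thesis .
    qed
  qed
  ultimately show ?case by blast
qed (auto intro: exI[of _ 1])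

lemma coords_bound:
  assumes "is_basis F L bs"
  shows "\<exists>C>0. \<forall>x\<in>L. \<forall>i. a (coords F bs x i) \<le> C * a x"
proof -
  interpret subfield_basis F L bs
    using assms subfield_F subfield_L F_subset_L by (simp add: subfield_basis_def)
  obtain C where "C > 0"
    and C: "\<forall>c. (\<forall>i<length bs. c i \<in> F) \<longrightarrow> (\<forall>i<length bs. a (c i) \<le> C * a (lincomb bs c))"
    using lincomb_coeff_bound[OF basis_in] basis by (auto simp: is_basis_def)
  have "a (coords F bs x i) \<le> C * a x" if x: "x \<in> L" for x i
  proof (cases "i < length bs")
    case True
    then show ?thesis using C coords_in[OF x] lincomb_coords[OF x] by metis
  next
    case False
    then show ?thesis using coords_beyond[OF x] A.nonneg[OF x] \<open>C > 0\<close> by simp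
  qed
  then show ?thesis using \<open>C > 0\<close> by blast
qed

end

locale local_field =
  fixes F :: "'a::field set" and a :: "'a \<Rightarrow> real"
  assumes normalized: "normalized_local_field F a"
begin

sublocale nonarch_abs F a
  using normalized by (simp add: normalized_local_field_def nonarch_abs_def)

definition integers :: "'a set" where
  "integers = {x \<in> F. a x \<le> 1}"

definition residue_rel :: "('a \<times> 'a) set" where
  "residue_rel = {(x, y). x \<in> F \<and> y \<in> F \<and> a x \<le> 1 \<and> a y \<le> 1 \<and> a (x - y) < 1}"

definition q :: real where
  "q = real (card (residue_field F a))"

lemma residue_field_eq: "residue_field F a = integers // residue_rel"
  by (simp add: residue_field_def integers_def residue_rel_def)

lemma finite_residue_field: "finite (residue_field F a)"
  using normalized by (simp add: normalized_local_field_def)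

lemma value_group: "a ` (F - {0}) = {q powi i | i. True}"
  using normalized by (simp add: normalized_local_field_def q_def)

lemma q_ge_2: "2 \<le> q"
proof -
  have "1 \<in> residue_rel `` {1}" "1 \<notin> residue_rel `` {0}"
    using subfield_1[OF subfield] minus[OF subfield_1[OF subfield]] by (auto simp: residue_rel_def)
  then have "residue_rel `` {0} \<noteq> residue_rel `` {1}" by blast
  then have "card {residue_rel `` {0}, residue_rel `` {1}} = 2" by simp
  moreover have "0 \<in> integers" "1 \<in> integers"
    using subfield_0[OF subfield] subfield_1[OF subfield] by (auto simp: integers_def)
  then have "residue_rel `` {0} \<in> residue_field F a" "residue_rel `` {1} \<in> residue_field F a"
    unfolding residue_field_eq by (auto intro: quotientI)
  ultimately show ?thesis
    using card_mono[OF finite_residue_field, of "{residue_rel `` {0}, residue_rel `` {1}}"]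
    by (simp add: q_def)
qed

lemma residue_representatives:
  "\<exists>R. finite R \<and> R \<subseteq> integers \<and> (\<forall>u\<in>integers. \<exists>r\<in>R. a (u - r) < 1)"
proof -
  define rep where "rep C = (SOME x. x \<in> integers \<and> C = residue_rel `` {x})" for C
  have rep: "rep C \<in> integers \<and> C = residue_rel `` {rep C}" if C: "C \<in> residue_field F a" for C
  proof -
    obtain x where "x \<in> integers" "C = residue_rel `` {x}"
      using C unfolding residue_field_eq quotient_def by blast
    then show ?thesis unfolding rep_def by (rule someI[of _ x, OF conjI])
  qed
  have "\<exists>r\<in>rep ` residue_field F a. a (u - r) < 1" if u: "u \<in> integers" for u
  proof -
    let ?C = "residue_rel `` {u}"
    have C: "?C \<in> residue_field F a" unfolding residue_field_eq using u by (rule quotientI)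
    have "u \<in> ?C" using u by (simp add: residue_rel_def integers_def)
    then have "u \<in> residue_rel `` {rep ?C}" using rep[OF C] by simp
    then have "a (rep ?C - u) < 1" by (auto simp: residue_rel_def)
    then have "a (u - rep ?C) < 1" using rep[OF C] u minus_commute by (auto simp: integers_def)
    then show ?thesis using C by blast
  qed
  then show ?thesis using finite_residue_field rep by (intro exI[of _ "rep ` residue_field F a"]) auto
qed

lemma abs_lt_1_imp_le: "x \<in> F \<Longrightarrow> a x < 1 \<Longrightarrow> a x \<le> 1 / q"
proof (cases "x = 0")
  case False
  assume x: "x \<in> F" "a x < 1"
  then obtain i where i: "a x = q powi i" using value_group False by blast
  have "1 \<le> q" using q_ge_2 by simp
  then have "i < 0" using i x(2) by (metis not_less one_le_power_int)
  then have "q powi i \<le> q powi (-1)" using \<open>1 \<le> q\<close> by (intro power_int_increasing) auto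
  then show ?thesis using i by (simp add: power_int_minus inverse_eq_divide)
qed (use q_ge_2 in simp)

lemma uniformizer_exists: "\<exists>\<pi>\<in>F. \<pi> \<noteq> 0 \<and> a \<pi> = 1 / q"
proof -
  have "q powi (-1) \<in> a ` (F - {0})" using value_group by blast
  then show ?thesis by (auto simp: power_int_minus inverse_eq_divide)
qed

text \<open>The \<open>\<pi>\<close>-adic digits are taken from a finite set of residue representatives.\<close>

lemma integers_finite_net: "\<exists>R. finite R \<and> R \<subseteq> F \<and> (\<forall>x\<in>integers. \<exists>r\<in>R. a (x - r) \<le> (1 / q) ^ j)"
proof (induction j)
  case 0
  show ?case using subfield_0[OF subfield] by (intro exI[of _ "{0}"]) (auto simp: integers_def)
next
  case (Suc j)
  obtain R where R: "finite R" "R \<subseteq> F" "\<forall>x\<in>integers. \<exists>r\<in>R. a (x - r) \<le> (1 / q) ^ j"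
    using Suc.IH by blast
  obtain R0 where R0: "finite R0" "R0 \<subseteq> integers" "\<forall>u\<in>integers. \<exists>r\<in>R0. a (u - r) < 1"
    using residue_representatives by blast
  obtain \<pi> where \<pi>: "\<pi> \<in> F" "\<pi> \<noteq> 0" "a \<pi> = 1 / q" using uniformizer_exists by blast
  have \<pi>j: "\<pi> ^ j \<in> F" "\<pi> ^ j \<noteq> 0" "a (\<pi> ^ j) = (1 / q) ^ j"
    using \<pi> subfield_power[OF subfield] power by auto
  have "0 < q" using q_ge_2 by simp
  define R' where "R' = (\<lambda>(r, r0). r + \<pi> ^ j * r0) ` (R \<times> R0)"
  have "\<exists>r'\<in>R'. a (x - r') \<le> (1 / q) ^ Suc j" if x: "x \<in> integers" for x
  proof -
    obtain r where r: "r \<in> R" "a (x - r) \<le> (1 / q) ^ j" using R(3) x by blast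
    define u where "u = (x - r) / \<pi> ^ j"
    have "x - r \<in> F" using x r R(2) subfield_diff[OF subfield] by (auto simp: integers_def)
    then have uF: "u \<in> F" using \<pi>j subfield_divide[OF subfield] by (simp add: u_def)
    have xu: "x - r = \<pi> ^ j * u" using \<pi>j(2) by (simp add: u_def)
    have "(1 / q) ^ j * a u \<le> (1 / q) ^ j * 1" using r(2) xu mult[OF \<pi>j(1) uF] \<pi>j(3) by simp
    then have "u \<in> integers" using uF \<open>0 < q\<close> by (simp add: integers_def)
    then obtain r0 where r0: "r0 \<in> R0" "a (u - r0) < 1" using R0(3) by blast
    have ur0: "u - r0 \<in> F" using subfield_diff[OF subfield uF] r0(1) R0(2) by (auto simp: integers_def)
    have "x - (r + \<pi> ^ j * r0) = \<pi> ^ j * (u - r0)" using xu by (simp add: algebra_simps)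
    then have "a (x - (r + \<pi> ^ j * r0)) = (1 / q) ^ j * a (u - r0)"
      using mult[OF \<pi>j(1) ur0] \<pi>j(3) by simp
    also have "\<dots> \<le> (1 / q) ^ j * (1 / q)"
      using abs_lt_1_imp_le[OF ur0 r0(2)] \<open>0 < q\<close> by (intro mult_left_mono) auto
    finally have "a (x - (r + \<pi> ^ j * r0)) \<le> (1 / q) ^ Suc j" by (simp add: mult.commute)
    moreover have "r + \<pi> ^ j * r0 \<in> R'" unfolding R'_def using r(1) r0(1) by force
    ultimately show ?thesis by blast
  qed
  moreover have "R' \<subseteq> F"
    using R(2) R0(2) \<pi>j(1) unfolding R'_def integers_def
    by (auto intro!: subfield_add[OF subfield] subfield_mult[OF subfield])
  moreover have "finite R'" using R(1) R0(1) by (simp add: R'_def)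
  ultimately show ?case by blast
qed

lemma countable_dense_subset: "\<exists>D. countable D \<and> D \<subseteq> F \<and> (\<forall>x\<in>F. \<forall>e>0. \<exists>y\<in>D. a (x - y) < e)"
proof -
  obtain R where R: "\<And>j. finite (R j)" "\<And>j. R j \<subseteq> F"
    "\<And>j. \<forall>x\<in>integers. \<exists>r\<in>R j. a (x - r) \<le> (1 / q) ^ j"
    using integers_finite_net by metis
  obtain \<pi> where \<pi>: "\<pi> \<in> F" "\<pi> \<noteq> 0" "a \<pi> = 1 / q" using uniformizer_exists by blast
  have \<pi>F: "\<pi> ^ i \<in> F" and a\<pi>: "a (\<pi> ^ i) = (1 / q) ^ i" for i
    using \<pi> subfield_power[OF subfield] power by auto
  have "0 < q" "1 < q" using q_ge_2 by simp_all
  define D where "D = (\<Union>(i, j)\<in>(UNIV :: (nat \<times> nat) set). (\<lambda>r. r / \<pi> ^ i) ` R (i + j))"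
  have "\<exists>y\<in>D. a (x - y) < e" if x: "x \<in> F" and "e > 0" for x e
  proof -
    obtain i where i: "a x < q ^ i" using real_arch_pow[OF \<open>1 < q\<close>] by blast
    obtain j where j: "(1 / q) ^ j < e" using real_arch_pow_inv[OF \<open>e > 0\<close>, of "1 / q"] \<open>1 < q\<close> by auto
    define y where "y = x * \<pi> ^ i"
    have yF: "y \<in> F" using subfield_mult[OF subfield x \<pi>F] by (simp add: y_def)
    have "a y = a x * (1 / q) ^ i" using mult[OF x \<pi>F] a\<pi> by (simp add: y_def)
    also have "\<dots> \<le> q ^ i * (1 / q) ^ i" using i \<open>0 < q\<close> by (intro mult_right_mono) auto
    also have "\<dots> = 1" using \<open>0 < q\<close> by (simp add: power_one_over)
    finally have "y \<in> integers" using yF by (simp add: integers_def)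
    then obtain r where r: "r \<in> R (i + j)" "a (y - r) \<le> (1 / q) ^ (i + j)" using R(3) by blast
    have yr: "y - r \<in> F" using subfield_diff[OF subfield yF] r(1) R(2) by blast
    have "x - r / \<pi> ^ i = (y - r) * inverse (\<pi> ^ i)" using \<pi>(2) by (simp add: y_def field_simps)
    then have "a (x - r / \<pi> ^ i) = a (y - r) * inverse ((1 / q) ^ i)"
      using mult[OF yr subfield_inverse[OF subfield \<pi>F]] inverse[OF \<pi>F] a\<pi> by simp
    also have "\<dots> \<le> (1 / q) ^ (i + j) * inverse ((1 / q) ^ i)"
      using r(2) \<open>0 < q\<close> by (intro mult_right_mono) auto
    also have "\<dots> = (1 / q) ^ j" using \<open>0 < q\<close> by (simp add: power_add)
    finally have "a (x - r / \<pi> ^ i) < e" using j by simp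
    moreover have "r / \<pi> ^ i \<in> D" using r(1) by (auto simp: D_def)
    ultimately show ?thesis by blast
  qed
  moreover have "countable D" unfolding D_def using R(1) by (intro countable_UN) (auto intro: countable_finite)
  moreover have "D \<subseteq> F" using R(2) \<pi>F by (auto simp: D_def intro!: subfield_divide[OF subfield])
  ultimately show ?thesis by blast
qed

end

section \<open>Borel sets of a topology with a countable subbase\<close>

lemma continuous_map_preimage_borel_sets:
  assumes f: "continuous_map X Y f" and "B \<in> borel_sets Y"
  shows "{x \<in> topspace X. f x \<in> B} \<in> borel_sets X"
  using \<open>B \<in> borel_sets Y\<close> unfolding borel_sets_def
proof (induction rule: sigma_sets.induct)
  case (Basic U)
  then show ?case using openin_continuous_map_preimage[OF f] by auto
next
  case Empty
  then show ?case by (simp add: sigma_sets.Empty)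
next
  case (Compl U)
  have "{x \<in> topspace X. f x \<in> topspace Y - U} = topspace X - {x \<in> topspace X. f x \<in> U}"
    using f by (auto simp: continuous_map_def)
  then show ?case using Compl.IH by (simp add: sigma_sets.Compl)
next
  case (Union U)
  have "{x \<in> topspace X. f x \<in> (\<Union>i. U i)} = (\<Union>i. {x \<in> topspace X. f x \<in> U i})" by auto
  then show ?case using Union.IH by (simp add: sigma_sets.Union)
qed

lemma generate_topology_on_subbase_nbhd:
  assumes "generate_topology_on G W" "y \<in> W"
    and basis: "\<And>s y. s \<in> G \<Longrightarrow> y \<in> s \<Longrightarrow>
      \<exists>\<F>. finite \<F> \<and> \<F> \<subseteq> \<C> \<and> y \<in> S \<inter> \<Inter>\<F> \<and> S \<inter> \<Inter>\<F> \<subseteq> s"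
  shows "\<exists>\<F>. finite \<F> \<and> \<F> \<subseteq> \<C> \<and> y \<in> S \<inter> \<Inter>\<F> \<and> S \<inter> \<Inter>\<F> \<subseteq> W"
  using assms(1,2)
proof (induction arbitrary: y)
  case (Int A B)
  obtain \<F>1 where 1: "finite \<F>1" "\<F>1 \<subseteq> \<C>" "y \<in> S \<inter> \<Inter>\<F>1" "S \<inter> \<Inter>\<F>1 \<subseteq> A"
    using Int.IH(1)[of y] Int.prems by blast
  obtain \<F>2 where 2: "finite \<F>2" "\<F>2 \<subseteq> \<C>" "y \<in> S \<inter> \<Inter>\<F>2" "S \<inter> \<Inter>\<F>2 \<subseteq> B"
    using Int.IH(2)[of y] Int.prems by blast
  have "y \<in> S \<inter> \<Inter>(\<F>1 \<union> \<F>2)" using 1(3) 2(3) by blast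
  moreover have "S \<inter> \<Inter>(\<F>1 \<union> \<F>2) \<subseteq> A \<inter> B" using 1(4) 2(4) by blast
  moreover have "finite (\<F>1 \<union> \<F>2)" "\<F>1 \<union> \<F>2 \<subseteq> \<C>" using 1(1,2) 2(1,2) by simp_all
  ultimately show ?case by (intro exI[of _ "\<F>1 \<union> \<F>2"] conjI)
next
  case (UN \<K>)
  obtain W where W: "W \<in> \<K>" "y \<in> W" using UN.prems by blast
  have "W \<subseteq> \<Union>\<K>" using W(1) by blast
  then show ?case using UN.IH[OF W] by (meson subset_trans)
next
  case (Basis s)
  then show ?case by (rule basis)
qed simp

lemma borel_sets_eq_sigma_sets_countable_subbase:
  assumes "countable \<C>" and open_\<C>: "\<And>C. C \<in> \<C> \<Longrightarrow> openin X C"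
    and subbase: "\<And>U y. openin X U \<Longrightarrow> y \<in> U \<Longrightarrow>
      \<exists>\<F>. finite \<F> \<and> \<F> \<subseteq> \<C> \<and> y \<in> topspace X \<inter> \<Inter>\<F> \<and> topspace X \<inter> \<Inter>\<F> \<subseteq> U"
  shows "borel_sets X = sigma_sets (topspace X) \<C>"
  unfolding borel_sets_def
proof (rule sigma_sets_eqI)
  have "\<C> \<subseteq> Pow (topspace X)" using open_\<C> openin_subset by blast
  then interpret sigma_algebra "topspace X" "sigma_sets (topspace X) \<C>"
    by (rule sigma_algebra_sigma_sets)
  have finite_Inter: "topspace X \<inter> \<Inter>\<F> \<in> sigma_sets (topspace X) \<C>"
    if "finite \<F>" "\<F> \<subseteq> \<C>" for \<F>
    using that
  proof (induction rule: finite_induct)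
    case (insert C \<F>)
    have "topspace X \<inter> \<Inter>(insert C \<F>) = C \<inter> (topspace X \<inter> \<Inter>\<F>)" by auto
    then show ?case using insert by auto
  qed auto
  fix U assume "U \<in> {U. openin X U}"
  define \<I> where "\<I> = (\<lambda>\<F>. topspace X \<inter> \<Inter>\<F>) ` {\<F>. finite \<F> \<and> \<F> \<subseteq> \<C> \<and> topspace X \<inter> \<Inter>\<F> \<subseteq> U}"
  have "U \<subseteq> \<Union>\<I>"
  proof
    fix y assume "y \<in> U"
    then obtain \<F> where "finite \<F>" "\<F> \<subseteq> \<C>" "y \<in> topspace X \<inter> \<Inter>\<F>"
      "topspace X \<inter> \<Inter>\<F> \<subseteq> U"
      using subbase[of U y] \<open>U \<in> {U. openin X U}\<close> by auto
    then show "y \<in> \<Union>\<I>" unfolding \<I>_def by (intro UnionI[of "topspace X \<inter> \<Inter>\<F>"]) auto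
  qed
  then have "U = \<Union>\<I>" by (auto simp: \<I>_def)
  moreover have "countable \<I>"
    unfolding \<I>_def
    by (intro countable_image countable_subset[OF _ countable_Collect_finite_subset[OF \<open>countable \<C>\<close>]])
       auto
  moreover have "\<I> \<subseteq> sigma_sets (topspace X) \<C>" using finite_Inter by (auto simp: \<I>_def)
  ultimately show "U \<in> sigma_sets (topspace X) \<C>" using countable_Union by simp
qed (use open_\<C> in auto)

section \<open>The space of compatible trace sequences\<close>

locale tower =
  fixes K :: "nat \<Rightarrow> 'a::field_char_0 set" and nabs :: "nat \<Rightarrow> 'a \<Rightarrow> real"
  assumes incr: "\<And>n. K n \<subseteq> K (Suc n)"
    and fin: "\<And>n. finite_ext (K 0) (K n)"
    and local: "\<And>n. normalized_local_field (K n) (nabs n)"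
    and compat: "\<And>n. \<exists>s>0. \<forall>x\<in>K 0. nabs n x = nabs 0 x powr s"
begin

abbreviation k :: "'a set" where "k \<equiv> K 0"
abbreviation a0 :: "'a \<Rightarrow> real" where "a0 \<equiv> nabs 0"

sublocale base: local_field k a0
  using local[of 0] by (simp add: local_field_def)

lemma subfield_K: "is_subfield (K n)" and k_subset_K: "k \<subseteq> K n"
  using finite_ext_subfields[OF fin[of n]] by auto

lemma K_mono: "m \<le> n \<Longrightarrow> K m \<subseteq> K n"
  using lift_Suc_mono_le[of K, OF incr] by blast

lemma subfield_basis_K: "subfield_basis k (K n) (ext_basis k (K n))"
  using subfield_basis_ext_basis[OF fin] .

lemma mdeg_pos: "0 < mdeg K n"
  unfolding mdeg_def using ext_degree_pos[OF fin] .

lemma nabs_K: "nonarch_abs (K n) (nabs n)"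
  using local[of n] by (simp add: normalized_local_field_def nonarch_abs_def)

definition expo :: "nat \<Rightarrow> real" where
  "expo n = (SOME s. 0 < s \<and> (\<forall>x\<in>k. nabs n x = a0 x powr s))"

lemma expo_pos: "0 < expo n" and nabs_on_k: "x \<in> k \<Longrightarrow> nabs n x = a0 x powr expo n"
  using someI_ex[OF compat[of n]] by (auto simp: expo_def)

lemma abs_extension_K: "abs_extension k (K n) (nabs n) a0 (expo n)"
  unfolding abs_extension_def
  using subfield_K[of n] subfield_K[of 0] k_subset_K[of n] expo_pos[of n] nabs_on_k[of _ n]
    local[of n] local[of 0]
  by (simp add: normalized_local_field_def)

lemma Kbar_in: "y \<in> Kbar K \<Longrightarrow> y n \<in> K n"
  by (simp add: Kbar_def)

lemma Kbar_diff_in: "y \<in> Kbar K \<Longrightarrow> z \<in> Kbar K \<Longrightarrow> z n - y n \<in> K n"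
  using subfield_diff[OF subfield_K Kbar_in Kbar_in] .

definition coord :: "nat \<Rightarrow> nat \<Rightarrow> (nat \<Rightarrow> 'a) \<Rightarrow> 'a" where
  "coord n i y = coords k (ext_basis k (K n)) (y n) i"

lemma coord_in: "y \<in> Kbar K \<Longrightarrow> coord n i y \<in> k"
  unfolding coord_def using subfield_basis.coords_in[OF subfield_basis_K Kbar_in] .

lemma coord_linear:
  "c \<in> k \<Longrightarrow> y \<in> Kbar K \<Longrightarrow> z \<in> Kbar K \<Longrightarrow> coord n i (\<lambda>m. c * y m + z m) = c * coord n i y + coord n i z"
  unfolding coord_def using subfield_basis.coords_linear[OF subfield_basis_K _ Kbar_in Kbar_in] by simp

lemma coord_diff:
  assumes "y \<in> Kbar K" "z \<in> Kbar K"
  shows "coord n i z - coord n i y = coords k (ext_basis k (K n)) (z n - y n) i"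
proof -
  have "-1 \<in> k" using subfield_uminus[OF subfield_K subfield_1[OF subfield_K]] .
  then have "coords k (ext_basis k (K n)) ((-1) * y n + z n) i
      = (-1) * coords k (ext_basis k (K n)) (y n) i + coords k (ext_basis k (K n)) (z n) i"
    by (rule subfield_basis.coords_linear[OF subfield_basis_K _ Kbar_in[OF assms(1)] Kbar_in[OF assms(2)]])
  then show ?thesis by (simp add: coord_def)
qed

lemma coord_beyond: "y \<in> Kbar K \<Longrightarrow> mdeg K n \<le> i \<Longrightarrow> coord n i y = 0"
  unfolding coord_def mdeg_def
  using subfield_basis.coords_beyond[OF subfield_basis_K Kbar_in] by (simp add: length_ext_basis)

lemma level_eq_coord_sum:
  "y \<in> Kbar K \<Longrightarrow> y n = (\<Sum>i<mdeg K n. coord n i y * ext_basis k (K n) ! i)"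
  using subfield_basis.lincomb_coords[OF subfield_basis_K Kbar_in, of y n]
  by (simp add: coord_def lincomb_def length_ext_basis mdeg_def)

lemma nth_ext_basis_in: "i < mdeg K n \<Longrightarrow> ext_basis k (K n) ! i \<in> K n"
  using subfield_basis.nth_basis_in[OF subfield_basis_K] by (simp add: length_ext_basis mdeg_def)

definition trace_factor :: "nat \<Rightarrow> 'a" where
  "trace_factor n = of_nat (mdeg K 0) / of_nat (mdeg K n)"

lemma trace_factor_in: "trace_factor n \<in> k"
  unfolding trace_factor_def using subfield_K by (intro subfield_divide subfield_of_nat)

lemma trace_factor_nonzero: "trace_factor n \<noteq> 0"
  using mdeg_pos[of 0] mdeg_pos[of n] by (simp add: trace_factor_def)

lemma Tn_0_eq: "Tn K 0 n x = trace_factor n * field_trace k (K n) x"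
  by (simp add: Tn_def trace_factor_def)

lemma Tn_0_in: "x \<in> K n \<Longrightarrow> Tn K 0 n x \<in> k"
  unfolding Tn_0_eq using trace_factor_in field_trace_in[OF fin] subfield_mult[OF subfield_K] by blast

lemma Kbar_eq_if_K_eq:
  assumes "K j = K n" "j \<le> n" "y \<in> Kbar K"
  shows "y j = y n"
proof (cases "j = n")
  case False
  then have "y j = Tn K j n (y n)" using assms unfolding Kbar_def by auto
  also have "\<dots> = y n"
    using field_trace_self[OF subfield_K Kbar_in[OF assms(3)]] mdeg_pos[of n] assms(1)
    by (simp add: Tn_def mdeg_def)
  finally show ?thesis .
qed simp

lemma pairing_at_least_level:
  assumes "\<xi> \<in> K j" "j = 0 \<or> \<xi> \<notin> K (j - 1)"
  shows "pairing K \<xi> y = Tn K 0 j (\<xi> * y j)"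
proof -
  have "(LEAST j. \<xi> \<in> K j) = j"
  proof (rule Least_equality)
    show "j \<le> m" if "\<xi> \<in> K m" for m
    proof (rule ccontr)
      assume "\<not> j \<le> m"
      then have "K m \<subseteq> K (j - 1)" using K_mono[of m "j - 1"] by simp
      then show False using assms that \<open>\<not> j \<le> m\<close> by auto
    qed
  qed (fact assms(1))
  then show ?thesis by (simp add: pairing_def)
qed

lemma pairing_in: "y \<in> Kbar K \<Longrightarrow> \<xi> \<in> (\<Union>n. K n) \<Longrightarrow> pairing K \<xi> y \<in> k"
proof -
  assume y: "y \<in> Kbar K" and "\<xi> \<in> (\<Union>n. K n)"
  then have "\<xi> \<in> K (LEAST j. \<xi> \<in> K j)" by (auto intro: LeastI)
  then show ?thesis
    using Tn_0_in subfield_mult[OF subfield_K _ Kbar_in[OF y]] by (simp add: pairing_def Let_def)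
qed

lemma pairing_eq_coord_sum:
  assumes "\<xi> \<in> (\<Union>n. K n)"
  shows "\<exists>j g. (\<forall>i<mdeg K j. g i \<in> k) \<and>
    (\<forall>y\<in>Kbar K. pairing K \<xi> y = (\<Sum>i<mdeg K j. coord j i y * g i))"
proof -
  define j where "j = (LEAST j. \<xi> \<in> K j)"
  have \<xi>: "\<xi> \<in> K j" unfolding j_def using assms by (auto intro: LeastI)
  define g where "g i = trace_factor j * field_trace k (K j) (\<xi> * ext_basis k (K j) ! i)" for i
  have \<xi>b: "\<xi> * ext_basis k (K j) ! i \<in> K j" if "i < mdeg K j" for i
    using subfield_mult[OF subfield_K \<xi> nth_ext_basis_in[OF that]] .
  have "\<forall>i<mdeg K j. g i \<in> k"
    using trace_factor_in field_trace_in[OF fin \<xi>b] subfield_mult[OF subfield_K] by (simp add: g_def)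
  moreover have "pairing K \<xi> y = (\<Sum>i<mdeg K j. coord j i y * g i)" if y: "y \<in> Kbar K" for y
  proof -
    have "\<xi> * y j = (\<Sum>i<mdeg K j. coord j i y * (\<xi> * ext_basis k (K j) ! i))"
      using level_eq_coord_sum[OF y, of j] by (simp add: sum_distrib_left algebra_simps)
    then have "field_trace k (K j) (\<xi> * y j)
        = (\<Sum>i<mdeg K j. coord j i y * field_trace k (K j) (\<xi> * ext_basis k (K j) ! i))"
      using field_trace_sum[OF fin, of "{..<mdeg K j}"] coord_in[OF y] \<xi>b by simp
    then show ?thesis
      by (simp add: pairing_def Let_def j_def[symmetric] Tn_0_eq g_def sum_distrib_left algebra_simps)
  qed
  ultimately show ?thesis by blast
qed

text \<open>Since \<open>pairing\<close> only sees the least level containing \<open>\<xi>\<close>, a trace at a level \<open>j\<close> where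
  \<open>K\<close> grows is written as a difference of two pairings with elements of \<open>K\<^sub>j - K\<^sub>j\<^sub>-\<^sub>1\<close>.\<close>

lemma Tn_0_as_pairing_diff:
  assumes \<xi>: "\<xi> \<in> K j" and grow: "j = 0 \<or> K (j - 1) \<noteq> K j"
  shows "\<exists>\<xi>1\<in>(\<Union>n. K n). \<exists>\<xi>2\<in>(\<Union>n. K n). \<forall>y\<in>Kbar K.
    Tn K 0 j (\<xi> * y j) = pairing K \<xi>1 y - pairing K \<xi>2 y"
proof (cases "j = 0 \<or> \<xi> \<notin> K (j - 1)")
  case True
  have "(0::'a) \<in> K 0" using subfield_0[OF subfield_K] .
  then have "pairing K 0 y = 0" for y
    using pairing_at_least_level[of 0 0] Tn_0_eq field_trace_zero[OF fin] by simp
  then have "\<forall>y\<in>Kbar K. Tn K 0 j (\<xi> * y j) = pairing K \<xi> y - pairing K 0 y"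
    using pairing_at_least_level[OF \<xi> True] by simp
  moreover have "\<xi> \<in> (\<Union>n. K n)" "0 \<in> (\<Union>n. K n)" using \<xi> \<open>0 \<in> K 0\<close> by blast+
  ultimately show ?thesis by blast
next
  case False
  then have "K (j - 1) \<subset> K j" and \<xi>': "\<xi> \<in> K (j - 1)" using grow K_mono[of "j - 1" j] by auto
  then obtain \<xi>0 where \<xi>0: "\<xi>0 \<in> K j" "\<xi>0 \<notin> K (j - 1)" by blast
  have \<xi>\<xi>0: "\<xi> + \<xi>0 \<in> K j" using subfield_add[OF subfield_K \<xi> \<xi>0(1)] .
  have "\<xi> + \<xi>0 \<notin> K (j - 1)"
  proof
    assume "\<xi> + \<xi>0 \<in> K (j - 1)"
    then have "(\<xi> + \<xi>0) - \<xi> \<in> K (j - 1)" using subfield_diff[OF subfield_K _ \<xi>'] by blast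
    then show False using \<xi>0(2) by simp
  qed
  then have "Tn K 0 j (\<xi> * y j) = pairing K (\<xi> + \<xi>0) y - pairing K \<xi>0 y" if y: "y \<in> Kbar K" for y
    using pairing_at_least_level[OF \<xi>\<xi>0] pairing_at_least_level[OF \<xi>0(1)] \<xi>0(2)
      field_trace_add[OF fin subfield_mult[OF subfield_K \<xi> Kbar_in[OF y]]
        subfield_mult[OF subfield_K \<xi>0(1) Kbar_in[OF y]]]
    by (simp add: Tn_0_eq distrib_right algebra_simps)
  then show ?thesis using \<xi>\<xi>0 \<xi>0(1) by blast
qed

lemma coord_eq_pairing_diff:
  assumes i: "i < mdeg K n"
  shows "\<exists>c\<in>k. \<exists>\<xi>1\<in>(\<Union>n. K n). \<exists>\<xi>2\<in>(\<Union>n. K n). \<forall>y\<in>Kbar K.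
    coord n i y = c * (pairing K \<xi>1 y - pairing K \<xi>2 y)"
proof -
  obtain \<xi> where \<xi>: "\<xi> \<in> K n" "\<forall>w\<in>K n. coords k (ext_basis k (K n)) w i = field_trace k (K n) (\<xi> * w)"
    using coords_as_field_trace[OF fin[of n], of i] i by (auto simp: mdeg_def)
  define j where "j = (LEAST j. K j = K n)"
  have Kj: "K j = K n" unfolding j_def by (rule LeastI) simp
  have "j \<le> n" unfolding j_def by (rule Least_le) simp
  have "j = 0 \<or> K (j - 1) \<noteq> K j"
    using Least_le[of "\<lambda>j. K j = K n" "j - 1"] Kj by (cases j) (auto simp: j_def)
  then obtain \<xi>1 \<xi>2 where \<xi>12: "\<xi>1 \<in> (\<Union>n. K n)" "\<xi>2 \<in> (\<Union>n. K n)"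
    "\<forall>y\<in>Kbar K. Tn K 0 j (\<xi> * y j) = pairing K \<xi>1 y - pairing K \<xi>2 y"
    using Tn_0_as_pairing_diff[of \<xi> j] \<xi>(1) Kj by auto
  have "coord n i y = inverse (trace_factor j) * (pairing K \<xi>1 y - pairing K \<xi>2 y)"
    if y: "y \<in> Kbar K" for y
  proof -
    have "trace_factor j * field_trace k (K n) (\<xi> * y n) = pairing K \<xi>1 y - pairing K \<xi>2 y"
      using \<xi>12(3)[rule_format, OF y] Kj Kbar_eq_if_K_eq[OF Kj \<open>j \<le> n\<close> y] by (simp add: Tn_0_eq)
    then show ?thesis
      using \<xi>(2) Kbar_in[OF y] trace_factor_nonzero[of j] by (simp add: coord_def field_simps)
  qed
  moreover have "inverse (trace_factor j) \<in> k"
    using subfield_inverse[OF subfield_K trace_factor_in] .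
  ultimately show ?thesis using \<xi>12(1,2) by blast
qed

lemma topspace_strong_top [simp]: "topspace (strong_top K nabs) = Kbar K"
  by (auto simp: strong_top_def)

lemma topspace_weak_top [simp]: "topspace (weak_top K nabs) = Kbar K"
  by (auto simp: weak_top_def)

lemma openin_strong_ball:
  "y \<in> Kbar K \<Longrightarrow> 0 < r \<Longrightarrow>
    openin (strong_top K nabs) {z \<in> Kbar K. seminorm K nabs n (\<lambda>i. z i - y i) < r}"
  unfolding strong_top_def by (rule topology_generated_by_Basis) blast

lemma openin_weak_generator:
  "\<xi> \<in> (\<Union>n. K n) \<Longrightarrow> openin (k_top k a0) U \<Longrightarrow>
    openin (weak_top K nabs) {y \<in> Kbar K. pairing K \<xi> y \<in> U}"
  unfolding weak_top_def by (rule topology_generated_by_Basis) blast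

lemma seminorm_diff_less_iff:
  assumes "y \<in> Kbar K" "z \<in> Kbar K" "0 < r"
  shows "seminorm K nabs n (\<lambda>i. z i - y i) < r \<longleftrightarrow> nabs n (z n - y n) < r powr mdeg K n"
proof -
  interpret N: nonarch_abs "K n" "nabs n" using nabs_K .
  have "0 < real (mdeg K n)" using mdeg_pos by simp
  then show ?thesis
    using powr_less_powr_iff[of "1 / real (mdeg K n)" "nabs n (z n - y n)" "r powr mdeg K n"]
      \<open>0 < r\<close> N.nonneg[OF Kbar_diff_in[OF assms(1,2)]]
    by (simp add: seminorm_def powr_powr)
qed

lemma coord_diff_bound:
  "\<exists>C>0. \<forall>y\<in>Kbar K. \<forall>z\<in>Kbar K.
    a0 (coord n i z - coord n i y) powr expo n \<le> C * nabs n (z n - y n)"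
proof -
  interpret abs_extension k "K n" "nabs n" a0 "expo n" using abs_extension_K .
  obtain C where "C > 0" and C: "\<forall>x\<in>K n. \<forall>i. nabs n (coords k (ext_basis k (K n)) x i) \<le> C * nabs n x"
    using coords_bound subfield_basis.basis[OF subfield_basis_K] by blast
  have "a0 (coord n i z - coord n i y) powr expo n \<le> C * nabs n (z n - y n)"
    if "y \<in> Kbar K" "z \<in> Kbar K" for y z
    using C Kbar_diff_in[OF that] nabs_on_k[OF subfield_diff[OF subfield_K coord_in coord_in]]
      coord_diff[OF that] that by metis
  then show ?thesis using \<open>C > 0\<close> by blast
qed

lemma coord_strong_continuous: "continuous_map (strong_top K nabs) (k_top k a0) (coord n i)"
proof (rule base.continuous_map_k_topI)
  show "coord n i \<in> topspace (strong_top K nabs) \<rightarrow> k" using coord_in by auto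
next
  fix y and \<rho> :: real
  assume y: "y \<in> topspace (strong_top K nabs)" and "0 < \<rho>"
  obtain C where "C > 0"
    and C: "\<forall>y\<in>Kbar K. \<forall>z\<in>Kbar K. a0 (coord n i z - coord n i y) powr expo n \<le> C * nabs n (z n - y n)"
    using coord_diff_bound by blast
  define t where "t = (\<rho> powr expo n / C) powr (1 / mdeg K n)"
  define V where "V = {z \<in> Kbar K. seminorm K nabs n (\<lambda>i. z i - y i) < t}"
  have "0 < t" using \<open>0 < \<rho>\<close> \<open>C > 0\<close> by (simp add: t_def)
  have "t powr mdeg K n = \<rho> powr expo n / C"
    using mdeg_pos[of n] \<open>C > 0\<close> by (simp add: t_def powr_powr)
  have "openin (strong_top K nabs) V" using openin_strong_ball y \<open>0 < t\<close> by (simp add: V_def)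
  moreover have "y \<in> V"
    using y \<open>0 < t\<close> \<open>0 < \<rho>\<close> \<open>C > 0\<close> seminorm_diff_less_iff[of y y t n] nonarch_abs.zero[OF nabs_K]
    by (simp add: V_def \<open>t powr mdeg K n = \<rho> powr expo n / C\<close>)
  moreover have "a0 (coord n i z - coord n i y) < \<rho>" if "z \<in> V" for z
  proof -
    have z: "z \<in> Kbar K" and "nabs n (z n - y n) < \<rho> powr expo n / C"
      using that y seminorm_diff_less_iff[of y z t n] \<open>0 < t\<close>
      by (auto simp: V_def \<open>t powr mdeg K n = \<rho> powr expo n / C\<close>)
    then have "a0 (coord n i z - coord n i y) powr expo n < \<rho> powr expo n"
      using C y \<open>C > 0\<close> by (auto simp: field_simps intro: le_less_trans)
    then show ?thesis
      using powr_less_powr_iff[OF expo_pos] base.nonneg subfield_diff[OF subfield_K coord_in coord_in]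
        y z \<open>0 < \<rho>\<close> by simp
  qed
  ultimately show "\<exists>V. openin (strong_top K nabs) V \<and> y \<in> V \<and>
      (\<forall>z\<in>V. a0 (coord n i z - coord n i y) < \<rho>)" by blast
qed

lemma pairing_weak_continuous:
  assumes "\<xi> \<in> (\<Union>n. K n)"
  shows "continuous_map (weak_top K nabs) (k_top k a0) (pairing K \<xi>)"
  unfolding continuous_map_def
proof (intro conjI allI impI)
  show "pairing K \<xi> \<in> topspace (weak_top K nabs) \<rightarrow> topspace (k_top k a0)"
    using pairing_in[OF _ assms] by simp
  fix U assume "openin (k_top k a0) U"
  then show "openin (weak_top K nabs) {y \<in> topspace (weak_top K nabs). pairing K \<xi> y \<in> U}"
    using openin_weak_generator[OF assms] by simp
qed

lemma coord_weak_continuous: "continuous_map (weak_top K nabs) (k_top k a0) (coord n i)"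
proof (cases "i < mdeg K n")
  case True
  obtain c \<xi>1 \<xi>2 where c: "c \<in> k" and \<xi>: "\<xi>1 \<in> (\<Union>n. K n)" "\<xi>2 \<in> (\<Union>n. K n)"
    and eq: "\<forall>y\<in>Kbar K. coord n i y = c * (pairing K \<xi>1 y - pairing K \<xi>2 y)"
    using coord_eq_pairing_diff[OF True] by blast
  show ?thesis
    by (rule continuous_map_eq[OF base.continuous_map_scaled_diff[OF pairing_weak_continuous[OF \<xi>(1)]
        pairing_weak_continuous[OF \<xi>(2)] c]]) (use eq in simp)
next
  case False
  have "continuous_map (weak_top K nabs) (k_top k a0) (\<lambda>_. 0)"
    using subfield_0[OF subfield_K] by simp
  then show ?thesis by (rule continuous_map_eq) (use False coord_beyond in simp)
qed

lemma coord_cont_lin_functional: "coord n i \<in> cont_lin_functionals K nabs"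
  unfolding cont_lin_functionals_def using coord_in coord_linear coord_strong_continuous by blast

definition dense_k :: "'a set" where
  "dense_k = (SOME D. countable D \<and> D \<subseteq> k \<and> (\<forall>x\<in>k. \<forall>e>0. \<exists>y\<in>D. a0 (x - y) < e))"

lemma dense_k: "countable dense_k" "dense_k \<subseteq> k" "x \<in> k \<Longrightarrow> 0 < e \<Longrightarrow> \<exists>y\<in>dense_k. a0 (x - y) < e"
  using someI_ex[OF base.countable_dense_subset] unfolding dense_k_def by blast+

definition cylinder :: "nat \<Rightarrow> nat \<Rightarrow> 'a \<Rightarrow> nat \<Rightarrow> (nat \<Rightarrow> 'a) set" where
  "cylinder n i c m = {z \<in> Kbar K. coord n i z \<in> base.disc c (1 / Suc m)}"

definition cylinders :: "(nat \<Rightarrow> 'a) set set" where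
  "cylinders = {cylinder n i c m | n i c m. c \<in> dense_k}"

definition coord_nbhd :: "nat \<Rightarrow> (nat \<Rightarrow> 'a) \<Rightarrow> real \<Rightarrow> (nat \<Rightarrow> 'a) set" where
  "coord_nbhd n y \<delta> = {z \<in> Kbar K. \<forall>i<mdeg K n. a0 (coord n i z - coord n i y) < \<delta>}"

lemma countable_cylinders: "countable cylinders"
proof -
  have "cylinders = (\<lambda>(n, i, c, m). cylinder n i c m) ` (UNIV \<times> UNIV \<times> dense_k \<times> UNIV)"
    by (auto simp: cylinders_def)
  then show ?thesis using dense_k(1) by simp
qed

lemma openin_cylinder:
  assumes "topspace T = Kbar K" "\<And>n i. continuous_map T (k_top k a0) (coord n i)"
    and "C \<in> cylinders"
  shows "openin T C"
proof -
  obtain n i c m where C: "C = cylinder n i c m" "c \<in> dense_k"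
    using assms(3) by (auto simp: cylinders_def)
  then have "openin (k_top k a0) (base.disc c (1 / Suc m))"
    using dense_k(2) by (intro base.openin_disc) auto
  then show ?thesis
    using openin_continuous_map_preimage[OF assms(2)] assms(1) by (simp add: C cylinder_def)
qed

lemma cylinders_in_coord_nbhd:
  assumes y: "y \<in> Kbar K" and "0 < \<delta>"
  shows "\<exists>\<F>. finite \<F> \<and> \<F> \<subseteq> cylinders \<and> y \<in> Kbar K \<inter> \<Inter>\<F> \<and> Kbar K \<inter> \<Inter>\<F> \<subseteq> coord_nbhd n y \<delta>"
proof -
  obtain m :: nat where m: "1 / Suc m < \<delta>"
    using reals_Archimedean[OF \<open>0 < \<delta>\<close>] by (auto simp: inverse_eq_divide)
  have "\<forall>i. \<exists>c\<in>dense_k. a0 (coord n i y - c) < 1 / Suc m"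
    using dense_k(3) coord_in[OF y] by simp
  then obtain c where c: "\<And>i. c i \<in> dense_k" "\<And>i. a0 (coord n i y - c i) < 1 / Suc m"
    by metis
  have ck: "c i \<in> k" for i using c(1) dense_k(2) by blast
  define \<F> where "\<F> = (\<lambda>i. cylinder n i (c i) m) ` {..<mdeg K n}"
  have "\<F> \<subseteq> cylinders" using c(1) by (auto simp: \<F>_def cylinders_def)
  moreover have "y \<in> Kbar K \<inter> \<Inter>\<F>"
    using y c(2) coord_in[OF y] by (auto simp: \<F>_def cylinder_def base.disc_def)
  moreover have "Kbar K \<inter> \<Inter>\<F> \<subseteq> coord_nbhd n y \<delta>"
  proof
    fix z assume "z \<in> Kbar K \<inter> \<Inter>\<F>"
    then have z: "z \<in> Kbar K" "\<And>i. i < mdeg K n \<Longrightarrow> a0 (coord n i z - c i) < 1 / Suc m"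
      by (auto simp: \<F>_def cylinder_def base.disc_def)
    have "a0 (coord n i z - coord n i y) < \<delta>" if "i < mdeg K n" for i
    proof -
      have "a0 (c i - coord n i y) < 1 / Suc m"
        using c(2) base.minus_commute[OF coord_in[OF y] ck] by simp
      then show ?thesis
        using base.diff_le_max_diff[OF coord_in[OF z(1)] ck[of i] coord_in[OF y], of n i n i]
          z(2)[OF that] m by simp
    qed
    then show "z \<in> coord_nbhd n y \<delta>" using z(1) by (simp add: coord_nbhd_def)
  qed
  ultimately show ?thesis by (intro exI[of _ \<F>]) (simp add: \<F>_def)
qed

lemma borel_sets_eq_sigma_cylinders:
  assumes top: "topspace T = Kbar K" and cont: "\<And>n i. continuous_map T (k_top k a0) (coord n i)"
    and T: "T = topology_generated_by G"
    and G: "\<And>s y. s \<in> G \<Longrightarrow> y \<in> s \<Longrightarrow> y \<in> Kbar K \<and> (\<exists>n \<delta>. 0 < \<delta> \<and> coord_nbhd n y \<delta> \<subseteq> s)"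
  shows "borel_sets T = sigma_sets (Kbar K) cylinders"
proof -
  have "\<exists>\<F>. finite \<F> \<and> \<F> \<subseteq> cylinders \<and> y \<in> Kbar K \<inter> \<Inter>\<F> \<and> Kbar K \<inter> \<Inter>\<F> \<subseteq> U"
    if "openin T U" "y \<in> U" for U y
  proof (rule generate_topology_on_subbase_nbhd)
    show "generate_topology_on G U" using that(1) T openin_topology_generated_by by blast
  next
    fix s y assume "s \<in> G" "y \<in> s"
    then obtain n \<delta> where "y \<in> Kbar K" "0 < \<delta>" "coord_nbhd n y \<delta> \<subseteq> s" using G by blast
    then show "\<exists>\<F>. finite \<F> \<and> \<F> \<subseteq> cylinders \<and> y \<in> Kbar K \<inter> \<Inter>\<F> \<and> Kbar K \<inter> \<Inter>\<F> \<subseteq> s"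
      using cylinders_in_coord_nbhd[of y \<delta> n] by (meson subset_trans)
  qed (fact that(2))
  then show ?thesis
    using borel_sets_eq_sigma_sets_countable_subbase[OF countable_cylinders openin_cylinder[OF top cont]]
    by (simp add: top)
qed

lemma level_diff_le:
  assumes y: "y \<in> Kbar K" and z: "z \<in> Kbar K" and "0 \<le> \<delta>"
    and small: "\<forall>i<mdeg K n. a0 (coord n i z - coord n i y) \<le> \<delta>"
  shows "nabs n (z n - y n) \<le> \<delta> powr expo n * (\<Sum>i<mdeg K n. nabs n (ext_basis k (K n) ! i))"
proof -
  interpret N: nonarch_abs "K n" "nabs n" using nabs_K .
  have d: "coord n i z - coord n i y \<in> k" for i using subfield_diff[OF subfield_K coord_in[OF z] coord_in[OF y]] .
  have "z n - y n = (\<Sum>i<mdeg K n. (coord n i z - coord n i y) * ext_basis k (K n) ! i)"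
    using level_eq_coord_sum[OF z, of n] level_eq_coord_sum[OF y, of n]
    by (simp add: sum_subtractf left_diff_distrib)
  then have "nabs n (z n - y n)
      \<le> (\<Sum>i<mdeg K n. nabs n (coord n i z - coord n i y) * nabs n (ext_basis k (K n) ! i))"
    using N.sum_mult_le[of "{..<mdeg K n}" "\<lambda>i. coord n i z - coord n i y" "(!) (ext_basis k (K n))"]
      subsetD[OF k_subset_K d] nth_ext_basis_in by simp
  also have "\<dots> \<le> (\<Sum>i<mdeg K n. \<delta> powr expo n * nabs n (ext_basis k (K n) ! i))"
  proof (intro sum_mono mult_right_mono)
    fix i assume i: "i \<in> {..<mdeg K n}"
    then have "a0 (coord n i z - coord n i y) \<le> \<delta>" using small by simp
    then show "nabs n (coord n i z - coord n i y) \<le> \<delta> powr expo n"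
      using nabs_on_k[OF d, of n] powr_mono2[OF less_imp_le[OF expo_pos] base.nonneg[OF d]] by simp
    show "0 \<le> nabs n (ext_basis k (K n) ! i)"
      using N.nonneg[OF nth_ext_basis_in] i by simp
  qed
  finally show ?thesis by (simp add: sum_distrib_left)
qed

lemma strong_generator_contains_coord_nbhd:
  assumes "s \<in> insert (Kbar K)
      {{z \<in> Kbar K. seminorm K nabs n (\<lambda>i. z i - y i) < r} | n y r. y \<in> Kbar K \<and> r > 0}"
    and "y \<in> s"
  shows "y \<in> Kbar K \<and> (\<exists>n \<delta>. 0 < \<delta> \<and> coord_nbhd n y \<delta> \<subseteq> s)"
  using assms(1)
proof
  assume "s = Kbar K"
  then show ?thesis using assms(2) by (intro conjI exI[of _ 0] exI[of _ 1]) (auto simp: coord_nbhd_def)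
next
  assume "s \<in> {{z \<in> Kbar K. seminorm K nabs n (\<lambda>i. z i - y i) < r} | n y r. y \<in> Kbar K \<and> r > 0}"
  then obtain n y' r where s: "s = {z \<in> Kbar K. seminorm K nabs n (\<lambda>i. z i - y' i) < r}"
    and y': "y' \<in> Kbar K" and "0 < r"
    by blast
  interpret N: nonarch_abs "K n" "nabs n" using nabs_K .
  have y: "y \<in> Kbar K" using assms(2) s by simp
  define m where "m = real (mdeg K n)"
  have seminorm_less: "seminorm K nabs n (\<lambda>i. z i - y' i) < r \<longleftrightarrow> nabs n (z n - y' n) < r powr m"
    if "z \<in> Kbar K" for z
    using seminorm_diff_less_iff[OF y' that \<open>0 < r\<close>] by (simp add: m_def)
  define M where "M = (\<Sum>i<mdeg K n. nabs n (ext_basis k (K n) ! i))"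
  have "0 \<le> M" unfolding M_def using N.nonneg[OF nth_ext_basis_in] by (intro sum_nonneg) simp
  then obtain \<delta> where "0 < \<delta>" and \<delta>: "\<delta> powr expo n * M < r powr m"
    using exists_pos_powr_mult_less[of "r powr m" M "expo n"] \<open>0 < r\<close> expo_pos by auto
  have "coord_nbhd n y \<delta> \<subseteq> s"
  proof
    fix z assume "z \<in> coord_nbhd n y \<delta>"
    then have z: "z \<in> Kbar K" and "\<forall>i<mdeg K n. a0 (coord n i z - coord n i y) \<le> \<delta>"
      by (auto simp: coord_nbhd_def less_imp_le)
    then have "nabs n (z n - y n) \<le> \<delta> powr expo n * M"
      using level_diff_le[OF y z less_imp_le[OF \<open>0 < \<delta>\<close>], of n] by (simp add: M_def)
    then have "nabs n (z n - y n) < r powr m" using \<delta> by linarith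
    moreover have "nabs n (y n - y' n) < r powr m" using assms(2) s seminorm_less y by simp
    ultimately have "nabs n (z n - y' n) < r powr m"
      using N.diff_le_max_diff[OF Kbar_in[OF z] Kbar_in[OF y] Kbar_in[OF y']] by simp
    then show "z \<in> s" using s z seminorm_less by simp
  qed
  then show ?thesis using y \<open>0 < \<delta>\<close> by blast
qed

lemma weak_generator_contains_coord_nbhd:
  assumes "s \<in> insert (Kbar K) {{y \<in> Kbar K. pairing K \<xi> y \<in> U} | \<xi> U.
      \<xi> \<in> (\<Union>n. K n) \<and> openin (k_top (K 0) (nabs 0)) U}"
    and "y \<in> s"
  shows "y \<in> Kbar K \<and> (\<exists>n \<delta>. 0 < \<delta> \<and> coord_nbhd n y \<delta> \<subseteq> s)"
  using assms(1)
proof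
  assume "s = Kbar K"
  then show ?thesis using assms(2) by (intro conjI exI[of _ 0] exI[of _ 1]) (auto simp: coord_nbhd_def)
next
  assume "s \<in> {{y \<in> Kbar K. pairing K \<xi> y \<in> U} | \<xi> U. \<xi> \<in> (\<Union>n. K n) \<and> openin (k_top k a0) U}"
  then obtain \<xi> U where s: "s = {y \<in> Kbar K. pairing K \<xi> y \<in> U}"
    and \<xi>: "\<xi> \<in> (\<Union>n. K n)" and U: "openin (k_top k a0) U"
    by blast
  have y: "y \<in> Kbar K" using assms(2) s by simp
  obtain r where "0 < r" and r: "base.disc (pairing K \<xi> y) r \<subseteq> U"
    using base.openin_k_top_contains_disc[OF U] assms(2) s by auto
  obtain j g where g: "\<forall>i<mdeg K j. g i \<in> k"
    and pairing_eq: "\<forall>y\<in>Kbar K. pairing K \<xi> y = (\<Sum>i<mdeg K j. coord j i y * g i)"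
    using pairing_eq_coord_sum[OF \<xi>] by blast
  define G where "G = (\<Sum>i<mdeg K j. a0 (g i))"
  have "0 \<le> G" unfolding G_def using base.nonneg g by (intro sum_nonneg) simp
  then obtain \<delta> where "0 < \<delta>" and "\<delta> powr 1 * G < r"
    using exists_pos_powr_mult_less[OF \<open>0 < r\<close> _ zero_less_one] by blast
  then have \<delta>: "\<delta> * G < r" by simp
  have "coord_nbhd j y \<delta> \<subseteq> s"
  proof
    fix z assume "z \<in> coord_nbhd j y \<delta>"
    then have z: "z \<in> Kbar K" and small: "\<forall>i<mdeg K j. a0 (coord j i z - coord j i y) < \<delta>"
      by (auto simp: coord_nbhd_def)
    have d: "coord j i z - coord j i y \<in> k" for i
      using subfield_diff[OF subfield_K coord_in[OF z] coord_in[OF y]] .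
    have "pairing K \<xi> z - pairing K \<xi> y = (\<Sum>i<mdeg K j. (coord j i z - coord j i y) * g i)"
      using pairing_eq z y by (simp add: sum_subtractf left_diff_distrib)
    then have "a0 (pairing K \<xi> z - pairing K \<xi> y) \<le> (\<Sum>i<mdeg K j. a0 (coord j i z - coord j i y) * a0 (g i))"
      using base.sum_mult_le[of "{..<mdeg K j}" "\<lambda>i. coord j i z - coord j i y" g] d g by simp
    also have "\<dots> \<le> (\<Sum>i<mdeg K j. \<delta> * a0 (g i))"
      using small base.nonneg g by (intro sum_mono mult_right_mono) (auto intro: less_imp_le)
    also have "\<dots> < r" using \<delta> \<open>0 < \<delta>\<close> by (simp add: G_def sum_distrib_left)
    finally have "pairing K \<xi> z \<in> base.disc (pairing K \<xi> y) r"
      using pairing_in[OF z \<xi>] by (simp add: base.disc_def)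
    then show "z \<in> s" using r s z by auto
  qed
  then show ?thesis using y \<open>0 < \<delta>\<close> by blast
qed

lemma borel_sets_strong_top: "borel_sets (strong_top K nabs) = sigma_sets (Kbar K) cylinders"
  by (rule borel_sets_eq_sigma_cylinders[OF topspace_strong_top coord_strong_continuous strong_top_def
      strong_generator_contains_coord_nbhd])

lemma borel_sets_weak_top: "borel_sets (weak_top K nabs) = sigma_sets (Kbar K) cylinders"
  by (rule borel_sets_eq_sigma_cylinders[OF topspace_weak_top coord_weak_continuous weak_top_def
      weak_generator_contains_coord_nbhd])

lemma sigma_cylinders_subset_A_sigma: "sigma_sets (Kbar K) cylinders \<subseteq> A_sigma K nabs"
  unfolding A_sigma_def
proof (intro sigma_sets_mono subsetI)
  fix C assume "C \<in> cylinders"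
  then obtain n i c m where C: "C = cylinder n i c m" "c \<in> dense_k"
    by (auto simp: cylinders_def)
  then have "base.disc c (1 / Suc m) \<in> borel_sets (k_top k a0)"
    using base.openin_disc dense_k(2) by (auto simp: borel_sets_def intro!: sigma_sets.Basic)
  then show "C \<in> sigma_sets (Kbar K) {{y \<in> Kbar K. f y \<in> B} | f B.
      f \<in> cont_lin_functionals K nabs \<and> B \<in> borel_sets (k_top k a0)}"
    using coord_cont_lin_functional by (auto simp: C cylinder_def intro!: sigma_sets.Basic)
qed

lemma A_sigma_subset_borel_sets_strong_top: "A_sigma K nabs \<subseteq> borel_sets (strong_top K nabs)"
  unfolding A_sigma_def borel_sets_def[of "strong_top K nabs"] topspace_strong_top
proof (intro sigma_sets_mono subsetI)
  fix A assume "A \<in> {{y \<in> Kbar K. f y \<in> B} | f B.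
      f \<in> cont_lin_functionals K nabs \<and> B \<in> borel_sets (k_top k a0)}"
  then obtain f B where A: "A = {y \<in> Kbar K. f y \<in> B}"
    and f: "continuous_map (strong_top K nabs) (k_top k a0) f" and "B \<in> borel_sets (k_top k a0)"
    by (auto simp: cont_lin_functionals_def)
  then show "A \<in> sigma_sets (Kbar K) {U. openin (strong_top K nabs) U}"
    using continuous_map_preimage_borel_sets[OF f] by (simp add: borel_sets_def)
qed

end

theorem proposition3:
  fixes K :: "nat \<Rightarrow> 'a::field_char_0 set"
    and nabs :: "nat \<Rightarrow> 'a \<Rightarrow> real"
  assumes incr: "\<And>n. K n \<subseteq> K (Suc n)"
    and fin: "\<And>n. finite_ext (K 0) (K n)"
    and local: "\<And>n. normalized_local_field (K n) (nabs n)"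
    and compat: "\<And>n. \<exists>s>0. \<forall>x\<in>K 0. nabs n x = nabs 0 x powr s"
  shows "borel_sets (strong_top K nabs) = borel_sets (weak_top K nabs)
       \<and> borel_sets (weak_top K nabs) = A_sigma K nabs"
proof -
  interpret tower K nabs using assms by (rule tower.intro)
  have "borel_sets (strong_top K nabs) = sigma_sets (Kbar K) cylinders"
    by (rule borel_sets_strong_top)
  moreover have "borel_sets (weak_top K nabs) = sigma_sets (Kbar K) cylinders"
    by (rule borel_sets_weak_top)
  moreover have "sigma_sets (Kbar K) cylinders \<subseteq> A_sigma K nabs"
    by (rule sigma_cylinders_subset_A_sigma)
  moreover have "A_sigma K nabs \<subseteq> borel_sets (strong_top K nabs)"
    by (rule A_sigma_subset_borel_sets_strong_top)
  ultimately show ?thesis by blast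
qed

end
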